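(* Let $3\le n\le k$ be integers, let $X$ be the discrete-time Markov chain on $\mathbb{N}^{n-1}$ described in the context and $Y$ the chain embedded in $X$ at its visits to $S$. For $b\in\mathbb{R}$ let $V(\mathbf{x})=\sum_{i=1}^{n-1}x_i^2+b\sum_{1\le i<l\le n-1}x_ix_l$ and, for $\mathbf{x}\in S$, $\Delta_V(\mathbf{x})=\mathbb{E}[V(\mathbf{Y}_{t+1})-V(\mathbf{x})\mid \mathbf{Y}_t=\mathbf{x}]$. Then for $\mathbf{x}\in S\setminus S^\star$, $$k\,\Delta_V(\mathbf{x})=-(k-n)(2+b(n-2))\sum_{i=1}^{n-1}x_i+(n-1)\Big(k-n+2+b\frac{(k-n+1)(n-2)}{2}\Big),$$ and for $j=1,\dots,n-2$ and $\mathbf{x}_j'=(1,\dots,1,x_{j+1},\dots,x_{n-1})$ (first $j$ entries equal to $1$, $x_i\ge2$ for $i=j+1,\dots,n-1$), $$k\,\Delta_V(\mathbf{x}_j')=\Big[(k-n+1)(2+b(k-1))\sum_{i=2}^{j+1}\frac{1}{k-n+i}-(k-n)(2+b(n-2))\Big]\sum_{i=j+1}^{n-1}x_i+\delta_j,$$ where each $\delta_j$ is a real number independent of $x_{j+1},\dots,x_{n-1}$ and $\max_{1\le j\le n-2}|\delta_j|<\infty$.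
   Context: $\mathbb{N}=\{0,1,2,\dots\}$. $\mathbf{0}$, $\mathbf{1}$ are the all-zero and all-one vectors of dimension $n-1$, $\mathbf{e}_l$ the $l$-th unit vector. For $j=0,\dots,n-1$, $R_j$ is the set of $\mathbf{x}\in\mathbb{N}^{n-1}$ with exactly $j$ zero entries. $X=\{\mathbf{X}_t\}_{t\ge1}$ is the Markov chain on $\mathbb{N}^{n-1}$ with nonzero transition probabilities: from $\mathbf{x}\in R_0$, to $\mathbf{x}-\mathbf{1}$ w.p. $\frac{k-(n-1)}{k}$ and to $\mathbf{x}+\mathbf{e}_l$ w.p. $\frac1k$ ($l=1,\dots,n-1$); from $\mathbf{x}\in R_j$, $1\le j\le n-2$, to $\mathbf{x}+\mathbf{e}_l$ w.p. $\frac{k-(n-1-j)}{kj}$ if $x_l=0$ and w.p. $\frac1k$ if $x_l\ge1$; from $\mathbf{0}$ to $\mathbf{e}_l$ w.p. $\frac1{n-1}$. $S=\{\mathbf{x}:x_i\ge1\ \forall i\}$ and $S^\star=\{\mathbf{x}\in S:\mathbf{x}-\mathbf{1}\notin S\}$ (elements of $S$ with some entry equal to $1$). The embedded chain is $\mathbf{Y}_t=\mathbf{X}_{\sigma_t}$, where $\sigma_t=\min\{m\ge1:\sum_{i=1}^m\mathds{1}_{\{\mathbf{X}_i\in S\}}=t\}$; it is a Markov chain on $S$. *)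

theory Defs
  imports "HOL-Analysis.Analysis"
begin

text \<open>States of the chain on \<open>\<nat>^(n-1)\<close> are represented as functions \<open>nat \<Rightarrow> nat\<close>
  whose coordinates are indexed by \<open>1..n-1\<close> and which vanish outside this range.\<close>

definition states :: "nat \<Rightarrow> (nat \<Rightarrow> nat) set" where
  "states n = {x. \<forall>i. i \<notin> {1..n-1} \<longrightarrow> x i = 0}"

definition num_zeros :: "nat \<Rightarrow> (nat \<Rightarrow> nat) \<Rightarrow> nat" where
  "num_zeros n x = card {i \<in> {1..n-1}. x i = 0}"

definition unit_vec :: "nat \<Rightarrow> nat \<Rightarrow> nat" where
  "unit_vec l = (\<lambda>i. if i = l then 1 else 0)"

definition vec_add :: "(nat \<Rightarrow> nat) \<Rightarrow> (nat \<Rightarrow> nat) \<Rightarrow> nat \<Rightarrow> nat" where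
  "vec_add x y = (\<lambda>i. x i + y i)"

text \<open>\<open>x - 1\<close> (only applied to states with all coordinates \<open>\<ge> 1\<close>).\<close>
definition minus_ones :: "nat \<Rightarrow> (nat \<Rightarrow> nat) \<Rightarrow> nat \<Rightarrow> nat" where
  "minus_ones n x = (\<lambda>i. if i \<in> {1..n-1} then x i - 1 else x i)"

definition transX :: "nat \<Rightarrow> nat \<Rightarrow> (nat \<Rightarrow> nat) \<Rightarrow> (nat \<Rightarrow> nat) \<Rightarrow> real" where
  "transX n k x y =
    (if x \<notin> states n then 0
     else if num_zeros n x = 0 then
       (if y = minus_ones n x then (real k - (real n - 1)) / real k
        else if (\<exists>l\<in>{1..n-1}. y = vec_add x (unit_vec l)) then 1 / real k
        else 0)
     else if num_zeros n x \<le> n - 2 then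
       (if (\<exists>l\<in>{1..n-1}. y = vec_add x (unit_vec l)) then
          (if x (THE l. l \<in> {1..n-1} \<and> y = vec_add x (unit_vec l)) = 0
           then (real k - (real n - 1 - real (num_zeros n x))) / (real k * real (num_zeros n x))
           else 1 / real k)
        else 0)
     else
       (if (\<exists>l\<in>{1..n-1}. y = unit_vec l) then 1 / (real n - 1) else 0))"

definition inS :: "nat \<Rightarrow> (nat \<Rightarrow> nat) \<Rightarrow> bool" where
  "inS n x \<longleftrightarrow> x \<in> states n \<and> (\<forall>i\<in>{1..n-1}. 1 \<le> x i)"

definition inSstar :: "nat \<Rightarrow> (nat \<Rightarrow> nat) \<Rightarrow> bool" where
  "inSstar n x \<longleftrightarrow> inS n x \<and> \<not> inS n (minus_ones n x)"

fun path_prob :: "nat \<Rightarrow> nat \<Rightarrow> (nat \<Rightarrow> nat) \<Rightarrow> (nat \<Rightarrow> nat) list \<Rightarrow> real" where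
  "path_prob n k x [] = 1"
| "path_prob n k x (z # zs) = transX n k x z * path_prob n k z zs"

text \<open>Paths from the current state to the first subsequent visit of S (one step of Y).\<close>
definition first_return_paths :: "nat \<Rightarrow> (nat \<Rightarrow> nat) list set" where
  "first_return_paths n = {zs. zs \<noteq> [] \<and> inS n (last zs) \<and> (\<forall>z\<in>set (butlast zs). \<not> inS n z)}"

definition Vfun :: "real \<Rightarrow> nat \<Rightarrow> (nat \<Rightarrow> nat) \<Rightarrow> real" where
  "Vfun b n x = (\<Sum>i=1..n-1. real (x i) ^ 2)
      + b * (\<Sum>i=1..n-1. \<Sum>l=i+1..n-1. real (x i) * real (x l))"

definition DeltaV :: "nat \<Rightarrow> nat \<Rightarrow> real \<Rightarrow> (nat \<Rightarrow> nat) \<Rightarrow> real" where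
  "DeltaV n k b x = (\<Sum>\<^sub>\<infinity> zs \<in> first_return_paths n.
      path_prob n k x zs * (Vfun b n (last zs) - Vfun b n x))"

end

(*
  From x in S the embedded chain Y moves to some x + e_l, which lies in S, or, with probability
  (k - n + 1) / k, to x - 1.  If x is not in S*, then x - 1 lies in S as well and the drift is a
  finite computation.  For x = x'_j the chain X continues from x - 1, which has exactly j zero
  coordinates, and only raises coordinates until it re-enters S, with transition probabilities
  that depend only on which coordinates are zero.  Adding to x - 1 a vector d supported on its
  positive coordinates therefore shifts the return point by d, so the expected value of V at the
  return point changes by the expectation of an affine function of the return point.  That
  expectation only needs the expected length k (1/(k-n+2) + ... + 1/(k-n+j+1)) of the excursion,
  and k Delta_V(x'_j) differs from its value at (1,...,1,2,...,2) by a linear function of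
  x_{j+1} + ... + x_{n-1}.

  The sums over the infinitely many excursion paths are handled by first-step analysis, made
  rigorous by the Lyapunov function psi = k^(number of zeros) * (x_1 + ... + x_{n-1} + 2k)^2: the
  chain killed at S contracts psi, which gives summability of the path sums and uniqueness of
  psi-dominated solutions of the first-step equations.
*)

theory Submission
  imports Defs
begin

lemma sum_nonempty_lists_by_hd:
  assumes "finite F" "[] \<notin> F"
  shows "(\<Sum>zs\<in>F. f zs) = (\<Sum>z\<in>hd ` F. \<Sum>zs\<in>{zs. z # zs \<in> F}. f (z # zs))"
proof -
  have "{zs \<in> F. hd zs = z} = Cons z ` {zs. z # zs \<in> F}" for z
    using assms(2) by (auto simp: image_iff) (metis list.collapse)
  then show ?thesis
    using sum.image_gen[OF assms(1), of f hd] by (simp add: sum.reindex)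
qed

lemma sum_upper_pairs_eq:
  fixes f :: "nat \<Rightarrow> real"
  shows "2 * (\<Sum>i=1..N. \<Sum>l=i+1..N. f i * f l) = (\<Sum>i=1..N. f i)\<^sup>2 - (\<Sum>i=1..N. (f i)\<^sup>2)"
proof (induction N)
  case 0
  show ?case by simp
next
  case (Suc N)
  have "(\<Sum>i=1..Suc N. \<Sum>l=i+1..Suc N. f i * f l)
      = (\<Sum>i=1..N. (\<Sum>l=i+1..N. f i * f l) + f i * f (Suc N))"
    by (simp add: sum.cl_ivl_Suc)
  also have "\<dots> = (\<Sum>i=1..N. \<Sum>l=i+1..N. f i * f l) + (\<Sum>i=1..N. f i) * f (Suc N)"
    by (simp add: sum.distrib sum_distrib_right)
  finally show ?case
    using Suc.IH by (simp add: sum.cl_ivl_Suc power2_eq_square algebra_simps)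
qed

lemma square_add_one_le:
  fixes K t :: real
  assumes "0 < K" "0 \<le> t"
  shows "(t + 1 + 2 * K)\<^sup>2 \<le> ((2 * K + 1) / (2 * K))\<^sup>2 * (t + 2 * K)\<^sup>2"
proof -
  have "t + 1 + 2 * K \<le> (2 * K + 1) / (2 * K) * (t + 2 * K)"
    using assms by (simp add: field_simps)
  then have "(t + 1 + 2 * K)\<^sup>2 \<le> ((2 * K + 1) / (2 * K) * (t + 2 * K))\<^sup>2"
    using assms by (intro power_mono) auto
  then show ?thesis by (simp only: power_mult_distrib)
qed

section \<open>First passage of a Markov chain\<close>

text \<open>\<open>passage_mean x g\<close> is the expectation of \<open>g\<close> at the first visit of \<open>target\<close> after
  time \<open>0\<close>, written as a sum over the finite paths that realise this visit; \<open>invariant Q\<close>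
  says that the chain killed on \<open>target\<close> cannot leave \<open>Q\<close>.\<close>

locale first_passage =
  fixes p :: "'a \<Rightarrow> 'a \<Rightarrow> real" and nxt :: "'a \<Rightarrow> 'a set" and target :: "'a \<Rightarrow> bool"
  assumes p_nonneg: "0 \<le> p x y"
    and finite_nxt: "finite (nxt x)"
    and p_eq_0_outside_nxt: "y \<notin> nxt x \<Longrightarrow> p x y = 0"
begin

fun path_weight :: "'a \<Rightarrow> 'a list \<Rightarrow> real" where
  "path_weight x [] = 1"
| "path_weight x (z # zs) = p x z * path_weight z zs"

definition passage_paths :: "'a list set" where
  "passage_paths = {zs. zs \<noteq> [] \<and> target (last zs) \<and> (\<forall>z\<in>set (butlast zs). \<not> target z)}"

definition passage_mean :: "'a \<Rightarrow> ('a \<Rightarrow> real) \<Rightarrow> real" where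
  "passage_mean x g = (\<Sum>\<^sub>\<infinity>zs\<in>passage_paths. path_weight x zs * g (last zs))"

definition step_mean :: "'a \<Rightarrow> ('a \<Rightarrow> real) \<Rightarrow> real" where
  "step_mean x f = (\<Sum>y\<in>nxt x. p x y * f y)"

definition invariant :: "'a set \<Rightarrow> bool" where
  "invariant Q \<longleftrightarrow> (\<forall>a\<in>Q. \<forall>c\<in>nxt a. \<not> target c \<longrightarrow> c \<in> Q)"

lemma path_weight_nonneg: "0 \<le> path_weight x zs"
  by (induction zs arbitrary: x) (simp_all add: p_nonneg)

lemma Nil_notin_passage_paths: "[] \<notin> passage_paths"
  by (simp add: passage_paths_def)

lemma Cons_in_passage_paths_iff:
  "z # zs \<in> passage_paths \<longleftrightarrow> (if target z then zs = [] else zs \<in> passage_paths)"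
  by (cases zs) (auto simp: passage_paths_def)

lemma step_mean_cong: "(\<And>y. y \<in> nxt x \<Longrightarrow> f y = g y) \<Longrightarrow> step_mean x f = step_mean x g"
  by (simp add: step_mean_def)

lemma step_mean_mono: "(\<And>y. y \<in> nxt x \<Longrightarrow> f y \<le> g y) \<Longrightarrow> step_mean x f \<le> step_mean x g"
  unfolding step_mean_def by (intro sum_mono mult_left_mono p_nonneg)

lemma step_mean_scale: "step_mean x (\<lambda>y. c * f y) = c * step_mean x f"
  by (simp add: step_mean_def sum_distrib_left algebra_simps)

lemma step_mean_add: "step_mean x (\<lambda>y. f y + g y) = step_mean x f + step_mean x g"
  by (simp add: step_mean_def sum.distrib algebra_simps)

lemma step_mean_diff: "step_mean x (\<lambda>y. f y - g y) = step_mean x f - step_mean x g"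
  by (simp add: step_mean_def sum_subtractf algebra_simps)

lemma abs_step_mean_le: "\<bar>step_mean x f\<bar> \<le> step_mean x (\<lambda>y. \<bar>f y\<bar>)"
  unfolding step_mean_def
  by (rule order_trans[OF sum_abs]) (simp add: abs_mult p_nonneg)

lemma sum_paths_after_step_le:
  assumes g: "\<And>z. 0 \<le> g z" and T: "\<And>zs. zs \<in> T \<Longrightarrow> z # zs \<in> passage_paths"
    and tail: "\<not> target z \<Longrightarrow> (\<Sum>zs\<in>T. path_weight z zs * g (last zs)) \<le> h z"
  shows "(\<Sum>zs\<in>T. path_weight y (z # zs) * g (last (z # zs)))
    \<le> p y z * (if target z then g z else h z)"
proof (cases "target z")
  case True
  then have "T \<subseteq> {[]}" using T Cons_in_passage_paths_iff by auto
  then have "(\<Sum>zs\<in>T. path_weight y (z # zs) * g (last (z # zs)))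
      \<le> (\<Sum>zs\<in>{[]}. path_weight y (z # zs) * g (last (z # zs)))"
    by (intro sum_mono2) (auto intro: mult_nonneg_nonneg path_weight_nonneg g p_nonneg)
  then show ?thesis using True by simp
next
  case False
  then have "T \<subseteq> passage_paths" using T Cons_in_passage_paths_iff by auto
  then have "(\<Sum>zs\<in>T. path_weight y (z # zs) * g (last (z # zs)))
      = p y z * (\<Sum>zs\<in>T. path_weight z zs * g (last zs))"
    using Nil_notin_passage_paths by (auto simp: sum_distrib_left mult.assoc intro!: sum.cong)
  also have "\<dots> \<le> p y z * h z" using tail False by (intro mult_left_mono p_nonneg)
  finally show ?thesis using False by simp
qed

text \<open>Grouping the paths by their first step reduces the bound to the superharmonicity of \<open>h\<close>,
  by induction on the maximal length of the paths.\<close>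
lemma sum_passage_paths_le_superharmonic:
  assumes inv: "invariant Q" and g: "\<And>z. 0 \<le> g z" and h: "\<And>a. a \<in> Q \<Longrightarrow> 0 \<le> h a"
    and super: "\<And>a. a \<in> Q \<Longrightarrow> step_mean a (\<lambda>c. if target c then g c else h c) \<le> h a"
  shows "y \<in> Q \<Longrightarrow> finite F \<Longrightarrow> F \<subseteq> passage_paths \<Longrightarrow> \<forall>zs\<in>F. length zs \<le> N
    \<Longrightarrow> (\<Sum>zs\<in>F. path_weight y zs * g (last zs)) \<le> h y"
proof (induction N arbitrary: y F)
  case 0
  then have "F = {}" using Nil_notin_passage_paths by auto
  then show ?case using h "0.prems"(1) by simp
next
  case (Suc N)
  define G where "G z = p y z * (if target z then g z else h z)" for z
  define tails where "tails z = {zs. z # zs \<in> F}" for z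
  have inner: "(\<Sum>zs\<in>tails z. path_weight y (z # zs) * g (last (z # zs))) \<le> G z"
    if z: "z \<in> nxt y" for z
    unfolding G_def
  proof (rule sum_paths_after_step_le[OF g])
    show "z # zs \<in> passage_paths" if "zs \<in> tails z" for zs
      using that Suc.prems(3) by (auto simp: tails_def)
    assume not_target: "\<not> target z"
    have "Cons z ` tails z \<subseteq> F" by (auto simp: tails_def)
    then have "finite (tails z)"
      using Suc.prems(2) finite_subset finite_imageD inj_on_def by (metis list.inject)
    moreover have "z \<in> Q" "tails z \<subseteq> passage_paths"
      using not_target inv Suc.prems(1,3) z Cons_in_passage_paths_iff
      by (auto simp: invariant_def tails_def)
    moreover have "\<forall>zs\<in>tails z. length zs \<le> N" using Suc.prems(4) by (auto simp: tails_def)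
    ultimately show "(\<Sum>zs\<in>tails z. path_weight z zs * g (last zs)) \<le> h z"
      using Suc.IH by blast
  qed
  have G_nonneg: "0 \<le> G z" if "z \<in> nxt y" for z
    using inv Suc.prems(1) that h g by (auto simp: G_def invariant_def intro!: mult_nonneg_nonneg p_nonneg)
  have "(\<Sum>zs\<in>F. path_weight y zs * g (last zs))
      = (\<Sum>z\<in>hd ` F. \<Sum>zs\<in>tails z. path_weight y (z # zs) * g (last (z # zs)))"
    unfolding tails_def
    using Suc.prems(2,3) Nil_notin_passage_paths by (intro sum_nonempty_lists_by_hd) auto
  also have "\<dots> = (\<Sum>z\<in>hd ` F \<inter> nxt y. \<Sum>zs\<in>tails z. path_weight y (z # zs) * g (last (z # zs)))"
    using Suc.prems(2) by (intro sum.mono_neutral_right) (auto simp: p_eq_0_outside_nxt)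
  also have "\<dots> \<le> (\<Sum>z\<in>hd ` F \<inter> nxt y. G z)" by (intro sum_mono inner) auto
  also have "\<dots> \<le> (\<Sum>z\<in>nxt y. G z)"
    by (intro sum_mono2 finite_nxt G_nonneg) auto
  also have "\<dots> \<le> h y" using super[OF Suc.prems(1)] by (simp add: G_def step_mean_def)
  finally show ?case .
qed

lemma passage_mean_le_superharmonic:
  assumes inv: "invariant Q" and g: "\<And>z. 0 \<le> g z" and h: "\<And>a. a \<in> Q \<Longrightarrow> 0 \<le> h a"
    and super: "\<And>a. a \<in> Q \<Longrightarrow> step_mean a (\<lambda>c. if target c then g c else h c) \<le> h a"
    and y: "y \<in> Q"
  shows "(\<lambda>zs. path_weight y zs * g (last zs)) summable_on passage_paths"
    and "passage_mean y g \<le> h y"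
proof -
  have fin: "(\<Sum>zs\<in>F. path_weight y zs * g (last zs)) \<le> h y"
    if "finite F" "F \<subseteq> passage_paths" for F
    using that by (intro sum_passage_paths_le_superharmonic[OF inv g h super y, of F "Max (length ` F)"])
      auto
  show sm: "(\<lambda>zs. path_weight y zs * g (last zs)) summable_on passage_paths"
    by (rule nonneg_bdd_above_summable_on)
      (auto intro!: mult_nonneg_nonneg path_weight_nonneg g bdd_aboveI2 fin)
  show "passage_mean y g \<le> h y"
    unfolding passage_mean_def by (rule infsum_le_finite_sums[OF sm fin])
qed

lemma passage_mean_dominated:
  assumes inv: "invariant Q" and g0: "\<And>z. 0 \<le> g0 z" and h0: "\<And>a. a \<in> Q \<Longrightarrow> 0 \<le> h0 a"
    and super: "\<And>a. a \<in> Q \<Longrightarrow> step_mean a (\<lambda>c. if target c then g0 c else h0 c) \<le> h0 a"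
    and A: "0 \<le> A" and g: "\<And>z. \<bar>g z\<bar> \<le> A * g0 z" and y: "y \<in> Q"
  shows "(\<lambda>zs. path_weight y zs * g (last zs)) summable_on passage_paths"
    and "\<bar>passage_mean y g\<bar> \<le> A * h0 y"
proof -
  have sm0: "(\<lambda>zs. path_weight y zs * g0 (last zs)) summable_on passage_paths"
    using inv g0 h0 super y by (rule passage_mean_le_superharmonic(1))
  have mean0: "passage_mean y g0 \<le> h0 y"
    using inv g0 h0 super y by (rule passage_mean_le_superharmonic(2))
  have norm_le: "norm (path_weight y zs * g (last zs)) \<le> A * (path_weight y zs * g0 (last zs))" for zs
  proof -
    have "norm (path_weight y zs * g (last zs)) = path_weight y zs * \<bar>g (last zs)\<bar>"
      by (simp add: abs_mult path_weight_nonneg)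
    also have "\<dots> \<le> path_weight y zs * (A * g0 (last zs))"
      by (rule mult_left_mono[OF g path_weight_nonneg])
    finally show ?thesis by (simp add: algebra_simps)
  qed
  have sm0': "(\<lambda>zs. A * (path_weight y zs * g0 (last zs))) summable_on passage_paths"
    by (rule summable_on_cmult_right[OF sm0])
  show sm: "(\<lambda>zs. path_weight y zs * g (last zs)) summable_on passage_paths"
    by (rule abs_summable_summable, rule summable_on_comparison_test[OF sm0' norm_le norm_ge_zero])
  have "norm (passage_mean y g) \<le> A * passage_mean y g0"
    unfolding passage_mean_def
    by (rule norm_infsum_le[OF has_sum_infsum[OF sm] has_sum_cmult_right[OF has_sum_infsum[OF sm0]]])
      (rule norm_le)
  also have "\<dots> \<le> A * h0 y" by (rule mult_left_mono[OF mean0 A])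
  finally show "\<bar>passage_mean y g\<bar> \<le> A * h0 y" by simp
qed

lemma passage_paths_with_hd:
  "{zs \<in> passage_paths. hd zs = z} = Cons z ` (if target z then {[]} else passage_paths)"
proof
  show "Cons z ` (if target z then {[]} else passage_paths) \<subseteq> {zs \<in> passage_paths. hd zs = z}"
    using Cons_in_passage_paths_iff by (auto split: if_splits)
  show "{zs \<in> passage_paths. hd zs = z} \<subseteq> Cons z ` (if target z then {[]} else passage_paths)"
  proof
    fix zs assume zs: "zs \<in> {zs \<in> passage_paths. hd zs = z}"
    then obtain t where "zs = z # t" "z # t \<in> passage_paths"
      using Nil_notin_passage_paths by (cases zs) auto
    then show "zs \<in> Cons z ` (if target z then {[]} else passage_paths)"
      using Cons_in_passage_paths_iff[of z t] by (auto split: if_splits)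
  qed
qed

lemma has_sum_passage_first_step:
  assumes sm: "\<And>z. z \<in> nxt y \<Longrightarrow> \<not> target z
    \<Longrightarrow> (\<lambda>zs. path_weight z zs * g (last zs)) summable_on passage_paths"
  shows "((\<lambda>zs. path_weight y zs * g (last zs))
    has_sum step_mean y (\<lambda>z. if target z then g z else passage_mean z g)) passage_paths"
proof -
  define f where "f zs = path_weight y zs * g (last zs)" for zs
  define B where "B z = Cons z ` (if target z then {[]} else passage_paths)" for z
  note B_eq = passage_paths_with_hd[folded B_def, symmetric]
  have each: "(f has_sum p y z * (if target z then g z else passage_mean z g)) (B z)"
    if z: "z \<in> nxt y" for z
  proof (cases "target z")
    case True
    then show ?thesis using has_sum_finite[of "{[z]}" f] by (simp add: B_def f_def)
  next
    case False
    have "((\<lambda>zs. p y z * (path_weight z zs * g (last zs))) has_sum p y z * passage_mean z g)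
        passage_paths"
      unfolding passage_mean_def by (intro has_sum_cmult_right has_sum_infsum sm z False)
    then have "((f \<circ> Cons z) has_sum p y z * passage_mean z g) passage_paths"
      by (rule has_sum_cong[THEN iffD1, rotated])
        (use Nil_notin_passage_paths in \<open>auto simp: f_def neq_Nil_conv\<close>)
    then show ?thesis
      using False by (simp add: B_def has_sum_reindex inj_on_def)
  qed
  have "(f has_sum step_mean y (\<lambda>z. if target z then g z else passage_mean z g)) (\<Union>z\<in>nxt y. B z)"
    unfolding step_mean_def by (rule sum_has_sum[OF finite_nxt each]) (auto simp: B_eq)
  moreover have "f zs = 0" if "zs \<in> passage_paths" "zs \<notin> (\<Union>z\<in>nxt y. B z)" for zs
    using that Nil_notin_passage_paths p_eq_0_outside_nxt
    by (cases zs) (auto simp: B_eq f_def)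
  ultimately show ?thesis
    unfolding f_def[symmetric] by (subst has_sum_cong_neutral[where T = "\<Union>z\<in>nxt y. B z"]) (auto simp: B_eq)
qed

lemma passage_mean_first_step:
  assumes "\<And>z. z \<in> nxt y \<Longrightarrow> \<not> target z
    \<Longrightarrow> (\<lambda>zs. path_weight z zs * g (last zs)) summable_on passage_paths"
  shows "passage_mean y g = step_mean y (\<lambda>z. if target z then g z else passage_mean z g)"
  unfolding passage_mean_def[of y g] by (rule infsumI[OF has_sum_passage_first_step[OF assms]])

lemma passage_mean_diff_const:
  assumes "(\<lambda>zs. path_weight y zs * g (last zs)) summable_on passage_paths"
    and "(\<lambda>zs. path_weight y zs * 1) summable_on passage_paths"
  shows "passage_mean y (\<lambda>z. g z - c) = passage_mean y g - c * passage_mean y (\<lambda>_. 1)"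
proof -
  have "((\<lambda>zs. path_weight y zs * g (last zs) + (- c) * (path_weight y zs * 1))
      has_sum passage_mean y g + (- c) * passage_mean y (\<lambda>_. 1)) passage_paths"
    unfolding passage_mean_def using assms by (intro has_sum_add has_sum_cmult_right has_sum_infsum)
  then show ?thesis
    unfolding passage_mean_def by (intro infsumI) (simp add: algebra_simps)
qed

text \<open>A harmonic function with zero boundary values vanishes once it is dominated by a
  function \<open>\<psi>\<close> that the killed chain contracts: iterating gives \<open>\<bar>u\<bar> \<le> \<rho>^N \<psi>\<close>.\<close>
lemma harmonic_eq_0_if_contracting:
  assumes inv: "invariant Q"
    and contr: "\<And>a. a \<in> Q \<Longrightarrow> step_mean a (\<lambda>c. if target c then 0 else \<psi> c) \<le> \<rho> * \<psi> a"
    and \<rho>: "0 \<le> \<rho>" "\<rho> < 1"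
    and harm: "\<And>a. a \<in> Q \<Longrightarrow> u a = step_mean a (\<lambda>c. if target c then 0 else u c)"
    and bound: "\<And>a. a \<in> Q \<Longrightarrow> \<bar>u a\<bar> \<le> \<psi> a"
    and y: "y \<in> Q"
  shows "u y = 0"
proof -
  have pow: "a \<in> Q \<Longrightarrow> \<bar>u a\<bar> \<le> \<rho> ^ N * \<psi> a" for N a
  proof (induction N arbitrary: a)
    case 0
    then show ?case using bound by simp
  next
    case (Suc N)
    have "\<bar>u a\<bar> \<le> step_mean a (\<lambda>c. \<bar>if target c then 0 else u c\<bar>)"
      using harm[OF Suc.prems] abs_step_mean_le by metis
    also have "\<dots> \<le> step_mean a (\<lambda>c. \<rho> ^ N * (if target c then 0 else \<psi> c))"
      using inv Suc.prems Suc.IH by (intro step_mean_mono) (auto simp: invariant_def)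
    also have "\<dots> \<le> \<rho> ^ N * (\<rho> * \<psi> a)"
      unfolding step_mean_scale using \<rho> by (intro mult_left_mono contr Suc.prems) auto
    finally show ?case by (simp add: algebra_simps)
  qed
  have "(\<lambda>N. \<rho> ^ N * \<psi> y) \<longlonglongrightarrow> 0 * \<psi> y"
    using \<rho> by (intro tendsto_mult_right LIMSEQ_power_zero) auto
  then have "\<bar>u y\<bar> \<le> 0"
    by (intro LIMSEQ_le_const) (use pow y in auto)
  then show ?thesis by simp
qed

lemma passage_mean_unique:
  assumes inv: "invariant Q"
    and contr: "\<And>a. a \<in> Q \<Longrightarrow> step_mean a (\<lambda>c. if target c then 0 else \<psi> c) \<le> \<rho> * \<psi> a"
    and \<rho>: "0 \<le> \<rho>" "\<rho> < 1"
    and sm: "\<And>a. a \<in> Q \<Longrightarrow> (\<lambda>zs. path_weight a zs * g (last zs)) summable_on passage_paths"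
    and mean_bound: "\<And>a. a \<in> Q \<Longrightarrow> \<bar>passage_mean a g\<bar> \<le> \<psi> a"
    and harm: "\<And>a. a \<in> Q \<Longrightarrow> f a = step_mean a (\<lambda>c. if target c then g c else f c)"
    and f_bound: "\<And>a. a \<in> Q \<Longrightarrow> \<bar>f a\<bar> \<le> \<psi> a"
    and y: "y \<in> Q"
  shows "passage_mean y g = f y"
proof -
  define u where "u a = passage_mean a g - f a" for a
  have "u y = 0"
  proof (rule harmonic_eq_0_if_contracting[OF inv _ \<rho> _ _ y, where \<psi> = "\<lambda>a. 2 * \<psi> a"])
    show "step_mean a (\<lambda>c. if target c then 0 else 2 * \<psi> c) \<le> \<rho> * (2 * \<psi> a)" if "a \<in> Q" for a
    proof -
      have "step_mean a (\<lambda>c. if target c then 0 else 2 * \<psi> c)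
          = 2 * step_mean a (\<lambda>c. if target c then 0 else \<psi> c)"
        unfolding step_mean_def sum_distrib_left by (rule sum.cong) auto
      then show ?thesis using contr[OF that] by simp
    qed
    show "\<bar>u a\<bar> \<le> 2 * \<psi> a" if "a \<in> Q" for a
      using mean_bound[OF that] f_bound[OF that] by (simp add: u_def)
    show "u a = step_mean a (\<lambda>c. if target c then 0 else u c)" if a: "a \<in> Q" for a
    proof -
      have "passage_mean a g = step_mean a (\<lambda>c. if target c then g c else passage_mean c g)"
        using inv a by (intro passage_mean_first_step sm) (auto simp: invariant_def)
      then have "u a = step_mean a (\<lambda>c. if target c then g c else passage_mean c g)
          - step_mean a (\<lambda>c. if target c then g c else f c)"
        using harm[OF a] by (simp add: u_def)
      also have "\<dots> = step_mean a (\<lambda>c. if target c then 0 else u c)"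
        unfolding step_mean_diff[symmetric] by (rule step_mean_cong) (simp add: u_def)
      finally show ?thesis .
    qed
  qed
  then show ?thesis by (simp add: u_def)
qed

end

section \<open>The chain between two visits of \<open>S\<close>\<close>

locale chain =
  fixes n k :: nat
  assumes n_ge_3: "3 \<le> n" and n_le_k: "n \<le> k"
begin

abbreviation inc :: "(nat \<Rightarrow> nat) \<Rightarrow> nat \<Rightarrow> nat \<Rightarrow> nat" where
  "inc y l \<equiv> vec_add y (unit_vec l)"

definition successors :: "(nat \<Rightarrow> nat) \<Rightarrow> (nat \<Rightarrow> nat) set" where
  "successors y =
    (if num_zeros n y = 0 then insert (minus_ones n y) (inc y ` {1..n-1})
     else if num_zeros n y \<le> n - 2 then inc y ` {1..n-1}
     else unit_vec ` {1..n-1})"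

lemma k_pos: "0 < k"
  using n_ge_3 n_le_k by linarith

lemma transX_nonneg: "0 \<le> transX n k y z"
proof -
  have "num_zeros n y \<le> n - 2 \<Longrightarrow> 0 \<le> real k - (real n - 1 - real (num_zeros n y))"
    using n_le_k by linarith
  then show ?thesis
    using n_ge_3 n_le_k unfolding transX_def by (auto intro!: divide_nonneg_nonneg)
qed

sublocale first_passage "transX n k" successors "inS n"
proof
  show "z \<notin> successors y \<Longrightarrow> transX n k y z = 0" for y z
    unfolding transX_def successors_def by (auto split: if_splits)
qed (simp_all add: transX_nonneg successors_def)

lemma path_weight_eq_path_prob: "path_weight x zs = path_prob n k x zs"
  by (induction zs arbitrary: x) simp_all

lemma DeltaV_eq_passage_mean: "DeltaV n k b x = passage_mean x (\<lambda>z. Vfun b n z - Vfun b n x)"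
  by (simp add: DeltaV_def passage_mean_def passage_paths_def first_return_paths_def
      path_weight_eq_path_prob)

definition zeros :: "(nat \<Rightarrow> nat) \<Rightarrow> nat set" where
  "zeros y = {l \<in> {1..n-1}. y l = 0}"

definition positives :: "(nat \<Rightarrow> nat) \<Rightarrow> nat set" where
  "positives y = {l \<in> {1..n-1}. y l \<noteq> 0}"

definition mixed_states :: "(nat \<Rightarrow> nat) set" where
  "mixed_states = {y \<in> states n. num_zeros n y \<in> {1..n-2}}"

lemma num_zeros_eq_card: "num_zeros n y = card (zeros y)"
  by (simp add: num_zeros_def zeros_def)

lemma card_positives: "card (positives y) = n - 1 - num_zeros n y"
proof -
  have "zeros y \<union> positives y = {1..n-1}" "zeros y \<inter> positives y = {}"
    by (auto simp: zeros_def positives_def)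
  then have "card (zeros y) + card (positives y) = n - 1"
    by (metis card_Un_disjoint card_atLeastAtMost diff_Suc_1 finite_Un finite_atLeastAtMost)
  then show ?thesis by (simp add: num_zeros_eq_card)
qed

lemma inS_iff_num_zeros: "y \<in> states n \<Longrightarrow> inS n y \<longleftrightarrow> num_zeros n y = 0"
  by (force simp: inS_def num_zeros_def card_eq_0_iff)

lemma inc_apply: "inc y l i = y i + (if i = l then 1 else 0)"
  by (simp add: vec_add_def unit_vec_def)

lemma inc_in_states: "y \<in> states n \<Longrightarrow> l \<in> {1..n-1} \<Longrightarrow> inc y l \<in> states n"
  by (auto simp: states_def inc_apply)

lemma inj_on_inc: "inj_on (inc y) {1..n-1}"
proof (rule inj_onI)
  fix a c assume "inc y a = inc y c"
  then have "inc y a a = inc y c a" by simp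
  then show "a = c" by (simp add: inc_apply split: if_splits)
qed

lemma num_zeros_inc:
  "l \<in> {1..n-1} \<Longrightarrow> num_zeros n (inc y l) = (if y l = 0 then num_zeros n y - 1 else num_zeros n y)"
proof -
  assume l: "l \<in> {1..n-1}"
  have "zeros (inc y l) = zeros y - {l}" by (auto simp: zeros_def inc_apply)
  then show ?thesis
    using l by (simp add: num_zeros_eq_card card_Diff_singleton_if) (auto simp: zeros_def)
qed

lemma mixed_statesD:
  assumes "y \<in> mixed_states"
  shows "y \<in> states n" "\<not> inS n y" "1 \<le> num_zeros n y" "num_zeros n y \<le> n - 2"
  using assms inS_iff_num_zeros by (auto simp: mixed_states_def)

lemma successors_mixed: "y \<in> mixed_states \<Longrightarrow> successors y = inc y ` {1..n-1}"
  using mixed_statesD[of y] by (simp add: successors_def)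

lemma transX_inc:
  assumes y: "y \<in> mixed_states" and l: "l \<in> {1..n-1}"
  shows "transX n k y (inc y l) =
    (if y l = 0 then (real k - real n + 1 + real (num_zeros n y)) / (real k * real (num_zeros n y))
     else 1 / real k)"
proof -
  note y' = mixed_statesD[OF y]
  have "(THE l'. l' \<in> {1..n-1} \<and> inc y l = inc y l') = l"
    using l inj_on_inc[of y] by (auto simp: inj_on_def)
  moreover have "\<exists>l'\<in>{1..n-1}. inc y l = inc y l'" using l by blast
  moreover have "real k - (real n - 1 - real (num_zeros n y)) = real k - real n + 1 + real (num_zeros n y)"
    by simp
  ultimately show ?thesis
    unfolding transX_def using y'(1,3,4) by simp
qed

lemma inS_inc:
  assumes y: "y \<in> mixed_states" and l: "l \<in> {1..n-1}"
  shows "inS n (inc y l) \<longleftrightarrow> num_zeros n y = 1 \<and> y l = 0"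
  using mixed_statesD[OF y] inS_iff_num_zeros[OF inc_in_states[OF _ l]] num_zeros_inc[OF l]
  by auto

lemma invariant_mixed_states: "invariant mixed_states"
  unfolding invariant_def
proof (intro ballI impI)
  fix y z assume y: "y \<in> mixed_states" and z: "z \<in> successors y" and "\<not> inS n z"
  then obtain l where l: "l \<in> {1..n-1}" "z = inc y l" by (auto simp: successors_mixed)
  then have "z \<in> states n" "num_zeros n z \<le> num_zeros n y"
    using mixed_statesD[OF y] by (auto simp: inc_in_states num_zeros_inc)
  then show "z \<in> mixed_states"
    using \<open>\<not> inS n z\<close> mixed_statesD[OF y] inS_iff_num_zeros by (auto simp: mixed_states_def)
qed

lemma step_mean_mixed_eq_sum:
  assumes "y \<in> mixed_states"
  shows "step_mean y F = (\<Sum>l=1..n-1. transX n k y (inc y l) * F (inc y l))"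
  unfolding step_mean_def successors_mixed[OF assms] by (subst sum.reindex[OF inj_on_inc]) simp

lemma step_mean_mixed:
  assumes y: "y \<in> mixed_states"
  shows "step_mean y F =
    (real k - real n + 1 + real (num_zeros n y)) / (real k * real (num_zeros n y))
      * (\<Sum>l\<in>zeros y. F (inc y l))
    + 1 / real k * (\<Sum>l\<in>positives y. F (inc y l))"
proof -
  define c where "c = (real k - real n + 1 + real (num_zeros n y)) / (real k * real (num_zeros n y))"
  have "step_mean y F = (\<Sum>l\<in>{1..n-1}. transX n k y (inc y l) * F (inc y l))"
    by (rule step_mean_mixed_eq_sum[OF y])
  also have "\<dots> = (\<Sum>l\<in>{1..n-1}. if y l = 0 then c * F (inc y l) else 1 / real k * F (inc y l))"
    by (rule sum.cong[OF refl]) (simp add: transX_inc[OF y] c_def)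
  also have "\<dots> = (\<Sum>l\<in>zeros y. c * F (inc y l)) + (\<Sum>l\<in>positives y. 1 / real k * F (inc y l))"
  proof -
    have "{1..n-1} \<inter> {l. y l = 0} = zeros y" "{1..n-1} \<inter> - {l. y l = 0} = positives y"
      by (auto simp: zeros_def positives_def)
    then show ?thesis by (simp add: sum.If_cases)
  qed
  finally show ?thesis by (simp add: c_def sum_distrib_left)
qed

lemma step_mean_mixed_const:
  assumes y: "y \<in> mixed_states"
    and A: "\<And>l. l \<in> zeros y \<Longrightarrow> F (inc y l) = A"
    and B: "\<And>l. l \<in> positives y \<Longrightarrow> F (inc y l) = B"
  shows "step_mean y F = (real k - real n + 1 + real (num_zeros n y)) / real k * A
    + (real n - 1 - real (num_zeros n y)) / real k * B"
proof -
  have zeros_sum: "(\<Sum>l\<in>zeros y. F (inc y l)) = real (num_zeros n y) * A"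
    using A by (simp add: num_zeros_eq_card)
  have "real (card (positives y)) = real n - 1 - real (num_zeros n y)"
    using mixed_statesD[OF y] n_ge_3 by (simp add: card_positives of_nat_diff)
  then have positives_sum: "(\<Sum>l\<in>positives y. F (inc y l)) = (real n - 1 - real (num_zeros n y)) * B"
    using B by simp
  have "0 < real (num_zeros n y)" using mixed_statesD[OF y] by simp
  then show ?thesis
    unfolding step_mean_mixed[OF y] zeros_sum positives_sum using k_pos by (simp add: field_simps)
qed

definition coord_sum :: "(nat \<Rightarrow> nat) \<Rightarrow> real" where
  "coord_sum w = (\<Sum>i=1..n-1. real (w i))"

lemma coord_sum_nonneg: "0 \<le> coord_sum w"
  by (simp add: coord_sum_def sum_nonneg)

lemma coord_sum_inc: "l \<in> {1..n-1} \<Longrightarrow> coord_sum (inc y l) = coord_sum y + 1"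
  by (simp add: coord_sum_def inc_apply sum.distrib of_nat_add if_distrib[of real] cong: if_cong)

lemma step_mean_mixed_sum_zeros:
  assumes y: "y \<in> mixed_states"
  shows "step_mean y (\<lambda>z. \<phi> (coord_sum z) (num_zeros n z))
    = (real k - real n + 1 + real (num_zeros n y)) / real k
        * \<phi> (coord_sum y + 1) (num_zeros n y - 1)
      + (real n - 1 - real (num_zeros n y)) / real k
        * \<phi> (coord_sum y + 1) (num_zeros n y)"
proof (rule step_mean_mixed_const[OF y])
  fix l assume "l \<in> zeros y"
  then have l: "l \<in> {1..n-1}" "y l = 0" by (auto simp: zeros_def)
  then show "\<phi> (coord_sum (inc y l)) (num_zeros n (inc y l))
      = \<phi> (coord_sum y + 1) (num_zeros n y - 1)"
    by (simp only: coord_sum_inc[OF l(1)] num_zeros_inc[OF l(1)] l(2) if_True)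
next
  fix l assume "l \<in> positives y"
  then have l: "l \<in> {1..n-1}" "y l \<noteq> 0" by (auto simp: positives_def)
  then show "\<phi> (coord_sum (inc y l)) (num_zeros n (inc y l))
      = \<phi> (coord_sum y + 1) (num_zeros n y)"
    by (simp only: coord_sum_inc[OF l(1)] num_zeros_inc[OF l(1)] l(2) if_False)
qed

lemma successor_in_states: "y \<in> mixed_states \<Longrightarrow> c \<in> successors y \<Longrightarrow> c \<in> states n"
  using mixed_statesD(1) by (auto simp: successors_mixed inc_in_states)

lemma step_mean_mixed_target:
  "y \<in> mixed_states \<Longrightarrow> step_mean y (\<lambda>c. if inS n c then F c else G c)
    = step_mean y (\<lambda>c. if num_zeros n c = 0 then F c else G c)"
  by (intro step_mean_cong) (simp add: inS_iff_num_zeros successor_in_states)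

lemma step_mean_one: "y \<in> mixed_states \<Longrightarrow> step_mean y (\<lambda>_. 1) = 1"
  using step_mean_mixed_sum_zeros[of y "\<lambda>_ _. 1"] k_pos by (simp add: field_simps)

subsection \<open>A contracting Lyapunov function\<close>

definition psi :: "(nat \<Rightarrow> nat) \<Rightarrow> real" where
  "psi z = real k ^ num_zeros n z * (coord_sum z + 2 * real k)\<^sup>2"

definition rho :: real where
  "rho = (real k - 1) / real k * ((2 * real k + 1) / (2 * real k))\<^sup>2"

lemma rho_nonneg: "0 \<le> rho" and rho_less_1: "rho < 1"
proof -
  define K where "K = real k"
  have K: "3 \<le> K" using n_ge_3 n_le_k by (simp add: K_def)
  show "0 \<le> rho" using K by (simp add: rho_def K_def[symmetric])
  have "rho = (K - 1) * (2 * K + 1)\<^sup>2 / (4 * K ^ 3)"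
    unfolding rho_def K_def[symmetric] using K by (simp add: field_simps power2_eq_square power3_eq_cube)
  also have "(K - 1) * (2 * K + 1)\<^sup>2 = 4 * K ^ 3 - 3 * K - 1"
    by (simp add: power2_eq_square power3_eq_cube algebra_simps)
  finally show "rho < 1" using K by simp
qed

lemma sq_le_psi: "(coord_sum z + 2 * real k)\<^sup>2 \<le> psi z"
proof -
  have "1 \<le> real k ^ num_zeros n z" using k_pos by simp
  then show ?thesis
    unfolding psi_def using mult_right_mono[of 1 _ "(coord_sum z + 2 * real k)\<^sup>2"] by simp
qed

lemma affine_le_psi:
  assumes "0 \<le> \<alpha>" "0 \<le> \<beta>"
  shows "\<alpha> * coord_sum z + \<beta> \<le> (\<alpha> + \<beta>) * psi z"
proof -
  define u where "u = coord_sum z + 2 * real k"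
  have u: "1 \<le> u" "coord_sum z \<le> u" using coord_sum_nonneg[of z] k_pos by (simp_all add: u_def)
  have "u \<le> u\<^sup>2" using u mult_left_mono[of 1 u u] by (simp add: power2_eq_square)
  then have "coord_sum z \<le> u\<^sup>2" "1 \<le> u\<^sup>2" using u by linarith+
  then have "\<alpha> * coord_sum z + \<beta> * 1 \<le> \<alpha> * u\<^sup>2 + \<beta> * u\<^sup>2"
    using assms by (intro add_mono mult_left_mono)
  then have "\<alpha> * coord_sum z + \<beta> \<le> (\<alpha> + \<beta>) * u\<^sup>2" by (simp add: distrib_right)
  also have "\<dots> \<le> (\<alpha> + \<beta>) * psi z"
    using sq_le_psi[of z] assms by (intro mult_left_mono) (auto simp: u_def)
  finally show ?thesis .
qed

text \<open>The factor \<open>k ^ num_zeros\<close> makes \<open>psi\<close> contract: a zero coordinate is raised with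
  probability at least \<open>2 / k\<close>, which divides that factor by \<open>k\<close>, while the coordinate sum
  only grows by one.\<close>
lemma psi_contracting:
  assumes y: "y \<in> mixed_states"
  shows "step_mean y (\<lambda>c. if inS n c then 0 else psi c) \<le> rho * psi y"
proof -
  define K t m where "K = real k" and "t = coord_sum y" and "m = num_zeros n y"
  define \<phi> where "\<phi> s i = (if i = 0 then 0 else K ^ i * (s + 2 * K)\<^sup>2)" for s i
  define p where "p = K ^ (m - 1)"
  define W where "W = (t + 1 + 2 * K)\<^sup>2"
  define r where "r = K - real n + 1 + real m"
  define s where "s = real n - 1 - real m"
  have K: "3 \<le> K" using n_ge_3 n_le_k by (simp add: K_def)
  have m: "1 \<le> m" "m \<le> n - 2" using mixed_statesD[OF y] by (auto simp: m_def)
  have t: "0 \<le> t" by (simp add: t_def coord_sum_nonneg)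
  have r: "2 \<le> r" using m n_le_k by (simp add: r_def K_def)
  have s: "0 \<le> s" using m n_ge_3 by (simp add: s_def)
  have Km: "K ^ m = K * p" using m by (simp add: p_def power_eq_if)
  have pW: "0 \<le> p * W" using K by (simp add: p_def W_def)
  have "step_mean y (\<lambda>c. if inS n c then 0 else psi c) = step_mean y (\<lambda>c. \<phi> (coord_sum c) (num_zeros n c))"
    unfolding step_mean_mixed_target[OF y] by (intro step_mean_cong) (simp add: \<phi>_def psi_def K_def)
  also have "\<dots> = r / K * \<phi> (t + 1) (m - 1) + s / K * \<phi> (t + 1) m"
    unfolding step_mean_mixed_sum_zeros[OF y] by (simp add: r_def s_def K_def t_def m_def)
  also have "\<dots> \<le> r / K * (p * W) + s / K * (K * p * W)"
    using r K s Km by (intro add_mono mult_left_mono) (auto simp: \<phi>_def p_def W_def add_ac)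
  also have "\<dots> = p * W * (r / K + s)" using K by (simp add: field_simps)
  also have "\<dots> \<le> p * W * (K - 1)"
  proof (rule mult_left_mono[OF _ pW])
    have "r / K \<le> r / 3" using r K by (intro divide_left_mono) auto
    moreover have "r + s = K" by (simp add: r_def s_def)
    ultimately show "r / K + s \<le> K - 1" using r by linarith
  qed
  also have "\<dots> \<le> p * (((2 * K + 1) / (2 * K))\<^sup>2 * (t + 2 * K)\<^sup>2) * (K - 1)"
    using K t unfolding W_def by (intro mult_right_mono mult_left_mono square_add_one_le) (auto simp: p_def)
  also have "\<dots> = rho * psi y"
    unfolding rho_def psi_def K_def[symmetric] t_def[symmetric] m_def[symmetric] Km
    using K by (simp add: field_simps)
  finally show ?thesis .
qed

lemma step_mean_entering_S_le:
  assumes y: "y \<in> mixed_states"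
  shows "step_mean y (\<lambda>c. if inS n c then (coord_sum c)\<^sup>2 + 1 else 0) \<le> 2 * psi y"
proof -
  define t r where "t = coord_sum y" and "r = (real k - real n + 1 + real (num_zeros n y)) / real k"
  have r: "0 \<le> r" "r \<le> 1"
    using mixed_statesD[OF y] k_pos n_le_k n_ge_3 by (simp_all add: r_def)
  have "step_mean y (\<lambda>c. if inS n c then (coord_sum c)\<^sup>2 + 1 else 0)
      = r * (if num_zeros n y = 1 then (t + 1)\<^sup>2 + 1 else 0)"
    using step_mean_mixed_sum_zeros[OF y, of "\<lambda>s i. if i = 0 then s\<^sup>2 + 1 else 0"]
      mixed_statesD[OF y]
    unfolding step_mean_mixed_target[OF y] by (simp add: t_def r_def)
  also have "\<dots> \<le> (t + 1)\<^sup>2 + 1"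
    using r by (simp add: mult_left_le_one_le)
  also have "\<dots> \<le> 2 * (t + 2 * real k)\<^sup>2"
  proof -
    have "0 \<le> t" "t + 1 \<le> t + 2 * real k" using coord_sum_nonneg[of y] k_pos by (simp_all add: t_def)
    then have "(t + 1)\<^sup>2 \<le> (t + 2 * real k)\<^sup>2" "1 \<le> (t + 2 * real k)\<^sup>2"
      by (auto intro: power_mono one_le_power)
    then show ?thesis by linarith
  qed
  also have "\<dots> \<le> 2 * psi y" using sq_le_psi[of y] by (simp add: t_def)
  finally show ?thesis .
qed

lemma psi_superharmonic:
  assumes y: "y \<in> mixed_states"
  shows "step_mean y (\<lambda>c. if inS n c then (coord_sum c)\<^sup>2 + 1 else 2 / (1 - rho) * psi c)
    \<le> 2 / (1 - rho) * psi y"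
proof -
  let ?C = "2 / (1 - rho)"
  have "step_mean y (\<lambda>c. if inS n c then (coord_sum c)\<^sup>2 + 1 else ?C * psi c)
      = step_mean y (\<lambda>c. if inS n c then (coord_sum c)\<^sup>2 + 1 else 0)
        + ?C * step_mean y (\<lambda>c. if inS n c then 0 else psi c)"
    unfolding step_mean_scale[symmetric] step_mean_add[symmetric] by (intro step_mean_cong) simp
  also have "\<dots> \<le> 2 * psi y + ?C * (rho * psi y)"
    using rho_less_1 by (intro add_mono step_mean_entering_S_le mult_left_mono psi_contracting y) auto
  also have "\<dots> = ?C * psi y" using rho_less_1 by (simp add: field_simps)
  finally show ?thesis .
qed

lemma passage_mean_quadratic:
  assumes A: "0 \<le> A" and g: "\<And>z. \<bar>g z\<bar> \<le> A * ((coord_sum z)\<^sup>2 + 1)" and y: "y \<in> mixed_states"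
  shows "(\<lambda>zs. path_weight y zs * g (last zs)) summable_on passage_paths"
    and "\<bar>passage_mean y g\<bar> \<le> A * (2 / (1 - rho)) * psi y"
proof -
  have nonneg: "0 \<le> 2 / (1 - rho) * psi a" for a
    using rho_less_1 k_pos by (simp add: psi_def)
  show "(\<lambda>zs. path_weight y zs * g (last zs)) summable_on passage_paths"
    by (rule passage_mean_dominated(1)[OF invariant_mixed_states _ nonneg psi_superharmonic A g y])
      simp
  show "\<bar>passage_mean y g\<bar> \<le> A * (2 / (1 - rho)) * psi y"
    using passage_mean_dominated(2)[OF invariant_mixed_states _ nonneg psi_superharmonic A g y]
    by (simp add: mult.assoc)
qed

lemma passage_mean_first_step_mixed:
  assumes "y \<in> mixed_states" "0 \<le> A" "\<And>z. \<bar>g z\<bar> \<le> A * ((coord_sum z)\<^sup>2 + 1)"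
  shows "passage_mean y g = step_mean y (\<lambda>z. if inS n z then g z else passage_mean z g)"
  using assms invariant_mixed_states
  by (intro passage_mean_first_step passage_mean_quadratic(1)[OF assms(2,3)])
    (auto simp: invariant_def)

lemma passage_mean_eq_harmonic:
  assumes Q: "invariant Q" "Q \<subseteq> mixed_states"
    and g: "0 \<le> A" "\<And>z. \<bar>g z\<bar> \<le> A * ((coord_sum z)\<^sup>2 + 1)"
    and f: "0 \<le> B" "\<And>a. a \<in> Q \<Longrightarrow> \<bar>f a\<bar> \<le> B * psi a"
    and harm: "\<And>a. a \<in> Q \<Longrightarrow> f a = step_mean a (\<lambda>c. if inS n c then g c else f c)"
    and y: "y \<in> Q"
  shows "passage_mean y g = f y"
proof -
  define D where "D = A * (2 / (1 - rho)) + B"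
  have D: "0 \<le> D" using g(1) f(1) rho_less_1 by (simp add: D_def)
  have psi_nonneg: "0 \<le> psi a" for a by (simp add: psi_def)
  show ?thesis
  proof (rule passage_mean_unique[OF Q(1) _ rho_nonneg rho_less_1 _ _ harm _ y, where \<psi> = "\<lambda>a. D * psi a"])
    show "step_mean a (\<lambda>c. if inS n c then 0 else D * psi c) \<le> rho * (D * psi a)" if "a \<in> Q" for a
    proof -
      have "step_mean a (\<lambda>c. if inS n c then 0 else D * psi c)
          = D * step_mean a (\<lambda>c. if inS n c then 0 else psi c)"
        unfolding step_mean_scale[symmetric] by (intro step_mean_cong) simp
      also have "\<dots> \<le> D * (rho * psi a)"
        using that Q(2) by (intro mult_left_mono[OF psi_contracting D]) auto
      finally show ?thesis by (simp add: algebra_simps)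
    qed
    show "(\<lambda>zs. path_weight a zs * g (last zs)) summable_on passage_paths" if "a \<in> Q" for a
      using that Q(2) by (intro passage_mean_quadratic(1)[OF g]) auto
    have A_part: "0 \<le> A * (2 / (1 - rho)) * psi a" and B_part: "0 \<le> B * psi a" for a
      using g(1) f(1) rho_less_1 psi_nonneg[of a] by simp_all
    show "\<bar>passage_mean a g\<bar> \<le> D * psi a" if "a \<in> Q" for a
      using passage_mean_quadratic(2)[OF g, of a] that Q(2) B_part[of a]
      unfolding D_def distrib_right by auto
    show "\<bar>f a\<bar> \<le> D * psi a" if "a \<in> Q" for a
      using f(2)[OF that] A_part[of a] unfolding D_def distrib_right by linarith
  qed
qed

lemma passage_mean_one: "y \<in> mixed_states \<Longrightarrow> passage_mean y (\<lambda>_. 1) = 1"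
  using affine_le_psi[of 0 1] step_mean_one
  by (intro passage_mean_eq_harmonic[OF invariant_mixed_states order_refl, of 1 _ 1]) auto

subsection \<open>Shifting the start of an excursion\<close>

definition coord_sq :: "(nat \<Rightarrow> nat) \<Rightarrow> real" where
  "coord_sq w = (\<Sum>i=1..n-1. (real (w i))\<^sup>2)"

definition coord_dot :: "(nat \<Rightarrow> nat) \<Rightarrow> (nat \<Rightarrow> nat) \<Rightarrow> real" where
  "coord_dot d w = (\<Sum>i=1..n-1. real (d i) * real (w i))"

lemma coord_sq_nonneg: "0 \<le> coord_sq w"
  by (simp add: coord_sq_def sum_nonneg)

lemma coord_sq_le: "coord_sq w \<le> (coord_sum w)\<^sup>2"
proof -
  have "0 \<le> (\<Sum>i=1..n-1. \<Sum>l=i+1..n-1. real (w i) * real (w l))"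
    by (intro sum_nonneg mult_nonneg_nonneg) auto
  then show ?thesis
    using sum_upper_pairs_eq[of "\<lambda>i. real (w i)" "n - 1"]
    unfolding coord_sq_def coord_sum_def by linarith
qed

lemma Vfun_eq: "Vfun b n w = (1 - b / 2) * coord_sq w + b / 2 * (coord_sum w)\<^sup>2"
proof -
  define P where "P = (\<Sum>i=1..n-1. \<Sum>l=i+1..n-1. real (w i) * real (w l))"
  have P: "2 * P = (coord_sum w)\<^sup>2 - coord_sq w"
    using sum_upper_pairs_eq[of "\<lambda>i. real (w i)" "n - 1"]
    unfolding P_def coord_sq_def coord_sum_def .
  have "Vfun b n w = coord_sq w + b / 2 * (2 * P)"
    by (simp add: Vfun_def coord_sq_def P_def)
  also have "\<dots> = (1 - b / 2) * coord_sq w + b / 2 * (coord_sum w)\<^sup>2"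
    unfolding P by (simp add: algebra_simps)
  finally show ?thesis .
qed

lemma abs_Vfun_le: "\<bar>Vfun b n z\<bar> \<le> (1 + \<bar>b\<bar>) * ((coord_sum z)\<^sup>2 + 1)"
proof -
  have "\<bar>Vfun b n z\<bar> \<le> \<bar>1 - b / 2\<bar> * coord_sq z + \<bar>b / 2\<bar> * (coord_sum z)\<^sup>2"
    unfolding Vfun_eq using coord_sq_nonneg[of z]
    by (simp add: abs_mult abs_triangle_ineq[THEN order_trans])
  also have "\<dots> \<le> (\<bar>1 - b / 2\<bar> + \<bar>b / 2\<bar>) * (coord_sum z)\<^sup>2"
    using coord_sq_le[of z] by (simp add: distrib_right mult_left_mono)
  also have "\<dots> \<le> (1 + \<bar>b\<bar>) * ((coord_sum z)\<^sup>2 + 1)"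
    by (intro mult_mono) auto
  finally show ?thesis .
qed

lemma coord_sum_add: "coord_sum (vec_add w d) = coord_sum w + coord_sum d"
  by (simp add: coord_sum_def vec_add_def sum.distrib)

lemma coord_sq_add: "coord_sq (vec_add w d) = coord_sq w + 2 * coord_dot d w + coord_sq d"
  by (simp add: coord_sq_def coord_dot_def vec_add_def sum.distrib sum_distrib_left
      power2_eq_square algebra_simps)

lemma Vfun_add:
  "Vfun b n (vec_add w d) - Vfun b n w
    = (1 - b / 2) * (2 * coord_dot d w + coord_sq d)
      + b / 2 * (2 * coord_sum d * coord_sum w + (coord_sum d)\<^sup>2)"
  unfolding Vfun_eq coord_sum_add coord_sq_add by (simp add: power2_eq_square algebra_simps)

lemma coord_dot_inc:
  assumes "l \<in> {1..n-1}"
  shows "coord_dot d (inc y l) = coord_dot d y + real (d l)"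
proof -
  have "coord_dot d (inc y l) = (\<Sum>i=1..n-1. real (d i) * real (y i) + (if i = l then real (d l) else 0))"
    unfolding coord_dot_def by (intro sum.cong) (auto simp: inc_apply algebra_simps)
  then show ?thesis using assms by (simp add: coord_dot_def sum.distrib)
qed

definition hsum :: "nat \<Rightarrow> real" where
  "hsum m = (\<Sum>i=2..m+1. 1 / (real k - real n + real i))"

lemma hsum_0: "hsum 0 = 0"
  by (simp add: hsum_def)

lemma hsum_step: "1 \<le> m \<Longrightarrow> hsum m = hsum (m - 1) + 1 / (real k - real n + 1 + real m)"
  by (cases m) (simp_all add: hsum_def sum.cl_ivl_Suc add_ac)

lemma hsum_nonneg: "0 \<le> hsum m"
  unfolding hsum_def by (intro sum_nonneg) (use n_le_k in auto)

lemma hsum_le: "hsum m \<le> real m"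
proof -
  have "hsum m \<le> (\<Sum>i=2..m+1. 1)"
    unfolding hsum_def using n_le_k by (intro sum_mono) (auto simp: field_simps)
  then show ?thesis by simp
qed

lemma step_mean_coord_sum:
  assumes y: "y \<in> mixed_states"
  shows "step_mean y coord_sum = coord_sum y + 1"
proof -
  have "step_mean y coord_sum = (real k - real n + 1 + real (num_zeros n y)) / real k * (coord_sum y + 1)
      + (real n - 1 - real (num_zeros n y)) / real k * (coord_sum y + 1)"
    using step_mean_mixed_sum_zeros[OF y, of "\<lambda>t m. t"] by simp
  also have "\<dots> = coord_sum y + 1" using k_pos by (simp add: field_simps)
  finally show ?thesis .
qed

lemma step_mean_hsum:
  assumes y: "y \<in> mixed_states"
  shows "step_mean y (\<lambda>z. hsum (num_zeros n z)) = hsum (num_zeros n y) - 1 / real k"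
proof -
  define m r s where "m = num_zeros n y" and "r = real k - real n + 1 + real m"
    and "s = real n - 1 - real m"
  have r: "0 < r" using mixed_statesD[OF y] n_le_k by (simp add: r_def m_def)
  have "step_mean y (\<lambda>z. hsum (num_zeros n z)) = r / real k * hsum (m - 1) + s / real k * hsum m"
    using step_mean_mixed_sum_zeros[OF y, of "\<lambda>t m. hsum m"] by (simp add: m_def r_def s_def)
  also have "\<dots> = r / real k * (hsum m - 1 / r) + s / real k * hsum m"
    using hsum_step[of m] mixed_statesD[OF y] by (simp add: m_def r_def)
  also have "\<dots> = (r + s) / real k * hsum m - 1 / real k"
    using r k_pos by (simp add: field_simps)
  also have "r + s = real k" by (simp add: r_def s_def)
  finally show ?thesis using k_pos by (simp add: m_def)
qed

definition shiftable :: "(nat \<Rightarrow> nat) \<Rightarrow> (nat \<Rightarrow> nat) set" where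
  "shiftable d = {a \<in> mixed_states. \<forall>i. d i \<noteq> 0 \<longrightarrow> a i \<noteq> 0}"

lemma shiftableD:
  assumes "a \<in> shiftable d"
  shows "a \<in> mixed_states" "\<And>i. a i = 0 \<Longrightarrow> d i = 0"
  using assms by (auto simp: shiftable_def)

lemma step_mean_coord_dot:
  assumes a: "a \<in> shiftable d"
  shows "step_mean a (coord_dot d) = coord_dot d a + coord_sum d / real k"
proof -
  note y = shiftableD(1)[OF a] and supp = shiftableD(2)[OF a]
  have "(\<Sum>l\<in>zeros a. coord_dot d (inc a l)) = (\<Sum>l\<in>zeros a. coord_dot d a)"
  proof (rule sum.cong[OF refl])
    fix l assume "l \<in> zeros a"
    then have l: "l \<in> {1..n-1}" "a l = 0" by (auto simp: zeros_def)
    then show "coord_dot d (inc a l) = coord_dot d a" using coord_dot_inc[OF l(1)] supp by simp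
  qed
  then have zeros_part: "(\<Sum>l\<in>zeros a. coord_dot d (inc a l)) = real (num_zeros n a) * coord_dot d a"
    by (simp add: num_zeros_eq_card)
  have "coord_sum d = (\<Sum>l\<in>positives a. real (d l))"
    unfolding coord_sum_def positives_def using supp by (intro sum.mono_neutral_right) force+
  then have "(\<Sum>l\<in>positives a. coord_dot d (inc a l))
      = real (card (positives a)) * coord_dot d a + coord_sum d"
    by (simp add: positives_def coord_dot_inc sum.distrib)
  also have "real (card (positives a)) = real n - 1 - real (num_zeros n a)"
    using mixed_statesD[OF y] n_ge_3 by (simp add: card_positives of_nat_diff)
  finally have positives_part: "(\<Sum>l\<in>positives a. coord_dot d (inc a l))
      = (real n - 1 - real (num_zeros n a)) * coord_dot d a + coord_sum d" .
  have "0 < real (num_zeros n a)" using mixed_statesD[OF y] by simp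
  then show ?thesis
    unfolding step_mean_mixed[OF y] zeros_part positives_part using k_pos by (simp add: field_simps)
qed

text \<open>The expected gain in \<open>V\<close> at the first visit of \<open>S\<close> when the starting point is shifted by
  \<open>d\<close>: the chain moves identically, the expected number of steps is \<open>k \<cdot> hsum m\<close> from a
  state with \<open>m\<close> zeros, and a fraction \<open>1 / k\<close> of them raises any given positive coordinate.\<close>
definition shift_gain :: "real \<Rightarrow> (nat \<Rightarrow> nat) \<Rightarrow> (nat \<Rightarrow> nat) \<Rightarrow> real" where
  "shift_gain b d w =
    (1 - b / 2) * (2 * coord_dot d w + 2 * hsum (num_zeros n w) * coord_sum d + coord_sq d)
    + b / 2 * (2 * coord_sum d * (coord_sum w + real k * hsum (num_zeros n w)) + (coord_sum d)\<^sup>2)"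

lemma shift_gain_harmonic:
  assumes a: "a \<in> shiftable d"
  shows "step_mean a (shift_gain b d) = shift_gain b d a"
proof -
  note y = shiftableD(1)[OF a]
  define c0 c1 c2 c3 where "c0 = (1 - b / 2) * coord_sq d + b / 2 * (coord_sum d)\<^sup>2"
    and "c1 = 2 * (1 - b / 2)" and "c2 = 2 * (1 - b / 2) * coord_sum d + b * real k * coord_sum d"
    and "c3 = b * coord_sum d"
  have gain: "shift_gain b d = (\<lambda>z. c0 * 1 + c1 * coord_dot d z + c2 * hsum (num_zeros n z) + c3 * coord_sum z)"
    by (auto simp: shift_gain_def c0_def c1_def c2_def c3_def algebra_simps)
  show ?thesis
    unfolding gain step_mean_add step_mean_scale step_mean_one[OF y] step_mean_coord_dot[OF a]
      step_mean_hsum[OF y] step_mean_coord_sum[OF y]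
    using k_pos by (simp add: c1_def c2_def c3_def field_simps)
qed

lemma shift_gain_dominated: "\<exists>B\<ge>0. \<forall>a\<in>mixed_states. \<bar>shift_gain b d a\<bar> \<le> B * psi a"
proof -
  define D K where "D = coord_sum d" and "K = real k"
  define \<alpha> where "\<alpha> = (\<bar>1 - b / 2\<bar> + \<bar>b / 2\<bar>) * (2 * D)"
  define \<beta> where "\<beta> = \<bar>1 - b / 2\<bar> * (2 * K * D + coord_sq d) + \<bar>b / 2\<bar> * (2 * D * K\<^sup>2 + D\<^sup>2)"
  have D: "0 \<le> D" and K: "0 \<le> K" by (simp_all add: D_def K_def coord_sum_nonneg)
  have "\<bar>shift_gain b d a\<bar> \<le> (\<alpha> + \<beta>) * psi a" if a: "a \<in> mixed_states" for a
  proof -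
    define t H where "t = coord_sum a" and "H = hsum (num_zeros n a)"
    define X Y where "X = 2 * coord_dot d a + 2 * H * D + coord_sq d"
      and "Y = 2 * D * (t + K * H) + D\<^sup>2"
    have H: "0 \<le> H" "H \<le> K"
      using hsum_nonneg hsum_le[of "num_zeros n a"] mixed_statesD(4)[OF a] n_le_k
      by (auto simp: H_def K_def)
    have dot: "0 \<le> coord_dot d a" "coord_dot d a \<le> D * t"
      unfolding coord_dot_def D_def t_def coord_sum_def sum_distrib_right
      by (auto intro!: sum_nonneg sum_mono mult_right_mono member_le_sum simp: sum_distrib_left)
    have X: "0 \<le> X" "X \<le> 2 * D * t + (2 * K * D + coord_sq d)"
      using dot H D coord_sq_nonneg[of d] mult_right_mono[OF H(2) D] by (auto simp: X_def)
    have Y: "0 \<le> Y" "Y \<le> 2 * D * t + (2 * D * K\<^sup>2 + D\<^sup>2)"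
      using H D K coord_sum_nonneg[of a] mult_left_mono[OF H(2) K] mult_left_mono[of "K * H" "K * K" "2 * D"]
      by (auto simp: Y_def t_def power2_eq_square algebra_simps)
    have "\<bar>shift_gain b d a\<bar> = \<bar>(1 - b / 2) * X + b / 2 * Y\<bar>"
      by (simp add: shift_gain_def X_def Y_def D_def K_def t_def H_def)
    also have "\<dots> \<le> \<bar>1 - b / 2\<bar> * X + \<bar>b / 2\<bar> * Y"
      using X(1) Y(1) abs_triangle_ineq[of "(1 - b / 2) * X" "b / 2 * Y"] by (simp add: abs_mult)
    also have "\<dots> \<le> \<alpha> * t + \<beta>"
      using mult_left_mono[OF X(2), of "\<bar>1 - b / 2\<bar>"] mult_left_mono[OF Y(2), of "\<bar>b / 2\<bar>"]
      by (simp add: \<alpha>_def \<beta>_def algebra_simps)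
    also have "\<dots> \<le> (\<alpha> + \<beta>) * psi a"
      using D K coord_sq_nonneg[of d] by (simp add: t_def affine_le_psi \<alpha>_def \<beta>_def)
    finally show ?thesis .
  qed
  moreover have "0 \<le> \<alpha> + \<beta>" using D K coord_sq_nonneg[of d] by (simp add: \<alpha>_def \<beta>_def)
  ultimately show ?thesis by blast
qed

lemma num_zeros_add_shiftable:
  assumes a: "a \<in> shiftable d"
  shows "num_zeros n (vec_add a d) = num_zeros n a"
proof -
  have "zeros (vec_add a d) = zeros a" using shiftableD(2)[OF a] by (auto simp: zeros_def vec_add_def)
  then show ?thesis by (simp add: num_zeros_eq_card)
qed

lemma add_shiftable_in_mixed: "a \<in> shiftable d \<Longrightarrow> vec_add a d \<in> mixed_states"
  using shiftableD[of a d] mixed_statesD(1)[of a] num_zeros_add_shiftable[of a d]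
  by (auto simp: mixed_states_def states_def vec_add_def)

lemma inc_add: "inc (vec_add a d) l = vec_add (inc a l) d"
  by (simp add: vec_add_def unit_vec_def fun_eq_iff)

text \<open>Adding \<open>d\<close> does not change the set of zero coordinates, which alone governs the
  transitions out of a mixed state.\<close>
lemma step_mean_add_shiftable:
  assumes a: "a \<in> shiftable d"
  shows "step_mean (vec_add a d) F = step_mean a (\<lambda>c. F (vec_add c d))"
proof -
  have zero_iff: "vec_add a d l = 0 \<longleftrightarrow> a l = 0" for l
    using shiftableD(2)[OF a] by (auto simp: vec_add_def)
  have "transX n k (vec_add a d) (inc (vec_add a d) l) = transX n k a (inc a l)" if "l \<in> {1..n-1}" for l
    using that add_shiftable_in_mixed[OF a] shiftableD(1)[OF a]
    by (simp add: transX_inc num_zeros_add_shiftable[OF a] zero_iff)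
  then show ?thesis
    using add_shiftable_in_mixed[OF a] shiftableD(1)[OF a]
    by (simp add: step_mean_mixed_eq_sum inc_add)
qed

lemma inS_add_shiftable:
  assumes a: "a \<in> shiftable d" and c: "c \<in> successors a"
  shows "inS n (vec_add c d) \<longleftrightarrow> inS n c"
proof -
  obtain l where l: "l \<in> {1..n-1}" "c = inc a l"
    using c shiftableD(1)[OF a] by (auto simp: successors_mixed)
  have "vec_add a d l = 0 \<longleftrightarrow> a l = 0"
    using shiftableD(2)[OF a] by (auto simp: vec_add_def)
  then show ?thesis
    using l inS_inc[OF add_shiftable_in_mixed[OF a] l(1)] inS_inc[OF shiftableD(1)[OF a] l(1)]
    by (simp add: inc_add[symmetric] num_zeros_add_shiftable[OF a])
qed

lemma invariant_shiftable: "invariant (shiftable d)"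
  unfolding invariant_def
proof (intro ballI impI)
  fix a c assume a: "a \<in> shiftable d" and c: "c \<in> successors a" and "\<not> inS n c"
  then have "c \<in> mixed_states"
    using invariant_mixed_states shiftableD(1)[OF a] by (auto simp: invariant_def)
  moreover obtain l where l: "c = inc a l"
    using c shiftableD(1)[OF a] by (auto simp: successors_mixed)
  have "c i \<noteq> 0" if "d i \<noteq> 0" for i
    using shiftableD(2)[OF a, of i] that by (auto simp: l inc_apply)
  ultimately show "c \<in> shiftable d" by (simp add: shiftable_def)
qed

lemma psi_add_shiftable:
  assumes a: "a \<in> shiftable d"
  shows "psi (vec_add a d) \<le> (1 + coord_sum d)\<^sup>2 * psi a"
proof -
  define t D where "t = coord_sum a" and "D = coord_sum d"
  have "1 \<le> real k" using k_pos by simp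
  then have "1 \<le> t + 2 * real k" "0 \<le> D" "0 \<le> t"
    using coord_sum_nonneg[of a] coord_sum_nonneg[of d] by (simp_all add: t_def D_def)
  then have "t + D + 2 * real k \<le> (1 + D) * (t + 2 * real k)"
    using mult_left_mono[of 1 "t + 2 * real k" D] by (simp add: algebra_simps)
  then have "(t + D + 2 * real k)\<^sup>2 \<le> ((1 + D) * (t + 2 * real k))\<^sup>2"
    using \<open>0 \<le> D\<close> \<open>0 \<le> t\<close> by (intro power_mono) auto
  then show ?thesis
    unfolding psi_def num_zeros_add_shiftable[OF a] coord_sum_add
    by (simp add: t_def D_def power_mult_distrib mult_left_mono mult.left_commute)
qed

lemma shift_gain_at_S:
  "num_zeros n c = 0 \<Longrightarrow> shift_gain b d c = Vfun b n (vec_add c d) - Vfun b n c"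
  by (simp add: shift_gain_def Vfun_add hsum_0)

lemma passage_mean_add_shiftable_harmonic:
  assumes a: "a \<in> shiftable d"
  shows "passage_mean (vec_add a d) (Vfun b n) - shift_gain b d a
    = step_mean a (\<lambda>c. if inS n c then Vfun b n c
        else passage_mean (vec_add c d) (Vfun b n) - shift_gain b d c)"
proof -
  let ?V = "Vfun b n"
  have "passage_mean (vec_add a d) ?V
      = step_mean (vec_add a d) (\<lambda>c. if inS n c then ?V c else passage_mean c ?V)"
    by (rule passage_mean_first_step_mixed[OF add_shiftable_in_mixed[OF a], of "1 + \<bar>b\<bar>"])
      (simp_all add: abs_Vfun_le)
  also have "\<dots> = step_mean a (\<lambda>c. if inS n c then ?V (vec_add c d) else passage_mean (vec_add c d) ?V)"
    unfolding step_mean_add_shiftable[OF a]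
    by (intro step_mean_cong) (simp add: inS_add_shiftable[OF a])
  finally have "passage_mean (vec_add a d) ?V - shift_gain b d a
      = step_mean a (\<lambda>c. if inS n c then ?V (vec_add c d) else passage_mean (vec_add c d) ?V)
        - step_mean a (shift_gain b d)"
    by (simp add: shift_gain_harmonic[OF a])
  also have "\<dots> = step_mean a (\<lambda>c. if inS n c then ?V c
      else passage_mean (vec_add c d) ?V - shift_gain b d c)"
    unfolding step_mean_diff[symmetric]
  proof (intro step_mean_cong)
    fix c assume c: "c \<in> successors a"
    have "num_zeros n c = 0" if "inS n c"
      using that inS_iff_num_zeros successor_in_states[OF shiftableD(1)[OF a] c] by blast
    then show "(if inS n c then ?V (vec_add c d) else passage_mean (vec_add c d) ?V) - shift_gain b d c
        = (if inS n c then ?V c else passage_mean (vec_add c d) ?V - shift_gain b d c)"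
      by (simp add: shift_gain_at_S)
  qed
  finally show ?thesis .
qed

text \<open>As functions of \<open>a\<close>, both sides solve the first-step equations with boundary values \<open>V\<close>
  and are dominated by a multiple of \<open>psi\<close>.\<close>
lemma passage_mean_add_shiftable:
  assumes a: "a \<in> shiftable d"
  shows "passage_mean (vec_add a d) (Vfun b n) = passage_mean a (Vfun b n) + shift_gain b d a"
proof -
  define A C where "A = 1 + \<bar>b\<bar>" and "C = 2 / (1 - rho)"
  define f where "f a = passage_mean (vec_add a d) (Vfun b n) - shift_gain b d a" for a
  obtain B where B: "0 \<le> B" "\<And>a. a \<in> mixed_states \<Longrightarrow> \<bar>shift_gain b d a\<bar> \<le> B * psi a"
    using shift_gain_dominated by blast
  have A: "0 \<le> A" "\<And>z. \<bar>Vfun b n z\<bar> \<le> A * ((coord_sum z)\<^sup>2 + 1)"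
    by (simp_all add: A_def abs_Vfun_le)
  have C: "0 \<le> C" using rho_less_1 by (simp add: C_def)
  have "passage_mean a (Vfun b n) = f a"
  proof (rule passage_mean_eq_harmonic[OF invariant_shiftable _ A _ _ _ a])
    show "shiftable d \<subseteq> mixed_states" using shiftableD(1) by blast
    show "0 \<le> A * C * (1 + coord_sum d)\<^sup>2 + B" using A C B by simp
    show "\<bar>f a\<bar> \<le> (A * C * (1 + coord_sum d)\<^sup>2 + B) * psi a" if a: "a \<in> shiftable d" for a
    proof -
      have "\<bar>passage_mean (vec_add a d) (Vfun b n)\<bar> \<le> A * C * psi (vec_add a d)"
        unfolding C_def by (rule passage_mean_quadratic(2)[OF A add_shiftable_in_mixed[OF a]])
      also have "\<dots> \<le> A * C * ((1 + coord_sum d)\<^sup>2 * psi a)"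
        using A C by (intro mult_left_mono psi_add_shiftable a) auto
      finally show ?thesis
        using B(2)[OF shiftableD(1)[OF a]] by (simp add: f_def algebra_simps)
    qed
    show "f a = step_mean a (\<lambda>c. if inS n c then Vfun b n c else f c)" if "a \<in> shiftable d" for a
      unfolding f_def by (rule passage_mean_add_shiftable_harmonic[OF that])
  qed
  then show ?thesis by (simp add: f_def)
qed

section \<open>The drift of \<open>V\<close> on \<open>S\<close>\<close>

lemma minus_ones_apply: "i \<in> {1..n-1} \<Longrightarrow> minus_ones n x i = x i - 1"
  by (simp add: minus_ones_def)

lemma successors_S:
  assumes x: "inS n x"
  shows "successors x = insert (minus_ones n x) (inc x ` {1..n-1})"
    and "minus_ones n x \<notin> inc x ` {1..n-1}"
proof -
  have st: "x \<in> states n" using x by (simp add: inS_def)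
  then show "successors x = insert (minus_ones n x) (inc x ` {1..n-1})"
    using x inS_iff_num_zeros by (simp add: successors_def)
  have one: "1 \<in> {1..n-1}" using n_ge_3 by simp
  then have "1 \<le> x 1" using x by (simp add: inS_def)
  then have ne: "minus_ones n x 1 \<noteq> inc x l 1" for l
    using one by (simp add: minus_ones_apply inc_apply)
  show "minus_ones n x \<notin> inc x ` {1..n-1}"
  proof
    assume "minus_ones n x \<in> inc x ` {1..n-1}"
    then obtain l where "minus_ones n x = inc x l" by blast
    then show False using ne[of l] by simp
  qed
qed

lemma transX_S:
  assumes x: "inS n x"
  shows "transX n k x (minus_ones n x) = (real k - real n + 1) / real k"
    and "l \<in> {1..n-1} \<Longrightarrow> transX n k x (inc x l) = 1 / real k"
proof -
  have st: "x \<in> states n" and nz: "num_zeros n x = 0"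
    using x inS_iff_num_zeros by (auto simp: inS_def)
  show "transX n k x (minus_ones n x) = (real k - real n + 1) / real k"
    using st nz by (simp add: transX_def)
  show "transX n k x (inc x l) = 1 / real k" if "l \<in> {1..n-1}"
    using st nz that successors_S(2)[OF x] by (auto simp: transX_def)
qed

lemma inc_in_S: "inS n x \<Longrightarrow> l \<in> {1..n-1} \<Longrightarrow> inS n (inc x l)"
  by (auto simp: inS_def inc_in_states inc_apply)

lemma step_mean_S:
  assumes x: "inS n x"
  shows "step_mean x F = (real k - real n + 1) / real k * F (minus_ones n x)
    + (\<Sum>l=1..n-1. F (inc x l)) / real k"
proof -
  have "(\<Sum>z\<in>inc x ` {1..n-1}. transX n k x z * F z) = (\<Sum>l=1..n-1. F (inc x l) / real k)"
    by (subst sum.reindex[OF inj_on_inc]) (simp add: transX_S[OF x])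
  then show ?thesis
    unfolding step_mean_def successors_S(1)[OF x] using successors_S(2)[OF x]
    by (simp add: transX_S[OF x] sum_divide_distrib)
qed

lemma abs_Vfun_diff_le: "\<bar>Vfun b n z - c\<bar> \<le> (1 + \<bar>b\<bar> + \<bar>c\<bar>) * ((coord_sum z)\<^sup>2 + 1)"
proof -
  have "\<bar>Vfun b n z - c\<bar> \<le> (1 + \<bar>b\<bar>) * ((coord_sum z)\<^sup>2 + 1) + \<bar>c\<bar> * 1"
    using abs_Vfun_le[of b z] by linarith
  also have "\<dots> \<le> (1 + \<bar>b\<bar>) * ((coord_sum z)\<^sup>2 + 1) + \<bar>c\<bar> * ((coord_sum z)\<^sup>2 + 1)"
    by (intro add_left_mono mult_left_mono) auto
  finally show ?thesis by (simp add: distrib_right)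
qed

lemma passage_mean_Vfun_diff:
  assumes y: "y \<in> mixed_states"
  shows "passage_mean y (\<lambda>z. Vfun b n z - c) = passage_mean y (Vfun b n) - c"
proof -
  have "(\<lambda>zs. path_weight y zs * Vfun b n (last zs)) summable_on passage_paths"
    by (rule passage_mean_quadratic(1)[of "1 + \<bar>b\<bar>", OF _ _ y]) (simp_all add: abs_Vfun_le)
  moreover have "(\<lambda>zs. path_weight y zs * 1) summable_on passage_paths"
    using passage_mean_quadratic(1)[of 1 "\<lambda>_. 1", OF _ _ y] by simp
  ultimately show ?thesis
    using passage_mean_diff_const passage_mean_one[OF y] by simp
qed

lemma drift_first_step:
  assumes x: "inS n x" and down: "inS n (minus_ones n x) \<or> minus_ones n x \<in> mixed_states"
  shows "real k * DeltaV n k b x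
    = (real k - real n + 1)
        * ((if inS n (minus_ones n x) then Vfun b n (minus_ones n x)
            else passage_mean (minus_ones n x) (Vfun b n)) - Vfun b n x)
      + (\<Sum>l=1..n-1. Vfun b n (inc x l) - Vfun b n x)"
proof -
  define g where "g = (\<lambda>z. Vfun b n z - Vfun b n x)"
  have g: "0 \<le> 1 + \<bar>b\<bar> + \<bar>Vfun b n x\<bar>"
    "\<bar>g z\<bar> \<le> (1 + \<bar>b\<bar> + \<bar>Vfun b n x\<bar>) * ((coord_sum z)\<^sup>2 + 1)" for z
    by (simp_all add: g_def abs_Vfun_diff_le)
  have "DeltaV n k b x = step_mean x (\<lambda>z. if inS n z then g z else passage_mean z g)"
  proof -
    have "z = minus_ones n x" if "z \<in> successors x" "\<not> inS n z" for z
      using that inc_in_S[OF x] by (auto simp: successors_S[OF x])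
    then show ?thesis
      unfolding DeltaV_eq_passage_mean g_def[symmetric]
      using down by (intro passage_mean_first_step passage_mean_quadratic(1)[OF g]) auto
  qed
  also have "\<dots> = (real k - real n + 1) / real k
        * (if inS n (minus_ones n x) then g (minus_ones n x) else passage_mean (minus_ones n x) g)
      + (\<Sum>l=1..n-1. g (inc x l)) / real k"
    unfolding step_mean_S[OF x] by (simp add: inc_in_S[OF x])
  also have "(if inS n (minus_ones n x) then g (minus_ones n x) else passage_mean (minus_ones n x) g)
      = (if inS n (minus_ones n x) then Vfun b n (minus_ones n x)
         else passage_mean (minus_ones n x) (Vfun b n)) - Vfun b n x"
    using down passage_mean_Vfun_diff by (auto simp: g_def)
  finally show ?thesis
    using k_pos by (simp add: g_def field_simps)
qed

lemma coord_sum_minus_ones: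
  assumes "inS n x"
  shows "coord_sum (minus_ones n x) = coord_sum x - (real n - 1)"
proof -
  have "coord_sum (minus_ones n x) = (\<Sum>i=1..n-1. real (x i) - 1)"
    unfolding coord_sum_def using assms
    by (intro sum.cong) (auto simp: inS_def minus_ones_apply of_nat_diff)
  then show ?thesis using n_ge_3 by (simp add: coord_sum_def sum_subtractf)
qed

lemma coord_sq_minus_ones:
  assumes "inS n x"
  shows "coord_sq (minus_ones n x) = coord_sq x - 2 * coord_sum x + (real n - 1)"
proof -
  have "coord_sq (minus_ones n x) = (\<Sum>i=1..n-1. (real (x i))\<^sup>2 - 2 * real (x i) + 1)"
    unfolding coord_sq_def using assms
    by (intro sum.cong) (auto simp: inS_def minus_ones_apply of_nat_diff power2_eq_square algebra_simps)
  then show ?thesis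
    using n_ge_3 by (simp add: coord_sq_def coord_sum_def sum.distrib sum_subtractf sum_distrib_left)
qed

lemma coord_dot_minus_ones:
  assumes "inS n x"
  shows "coord_dot d (minus_ones n x) = coord_dot d x - coord_sum d"
proof -
  have "coord_dot d (minus_ones n x) = (\<Sum>i=1..n-1. real (d i) * real (x i) - real (d i))"
    unfolding coord_dot_def using assms
    by (intro sum.cong) (auto simp: inS_def minus_ones_apply of_nat_diff algebra_simps)
  then show ?thesis by (simp add: coord_dot_def coord_sum_def sum_subtractf)
qed

lemma minus_ones_add: "inS n x \<Longrightarrow> minus_ones n (vec_add x d) = vec_add (minus_ones n x) d"
  by (auto simp: fun_eq_iff minus_ones_def vec_add_def inS_def)

lemma sum_Vfun_inc:
  "(\<Sum>l=1..n-1. Vfun b n (inc x l) - Vfun b n x)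
    = (1 - b / 2) * (2 * coord_sum x + (real n - 1)) + b / 2 * ((real n - 1) * (2 * coord_sum x + 1))"
proof -
  have unit: "coord_dot (unit_vec l) x = real (x l)" "coord_sq (unit_vec l) = 1"
    "coord_sum (unit_vec l) = 1" if "l \<in> {1..n-1}" for l
  proof -
    have "coord_dot (unit_vec l) x = (\<Sum>i=1..n-1. if i = l then real (x i) else 0)"
      unfolding coord_dot_def by (rule sum.cong) (auto simp: unit_vec_def)
    moreover have "coord_sq (unit_vec l) = (\<Sum>i=1..n-1. if i = l then 1 else 0)"
      unfolding coord_sq_def by (rule sum.cong) (auto simp: unit_vec_def)
    moreover have "coord_sum (unit_vec l) = (\<Sum>i=1..n-1. if i = l then 1 else 0)"
      unfolding coord_sum_def by (rule sum.cong) (auto simp: unit_vec_def)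
    ultimately show "coord_dot (unit_vec l) x = real (x l)" "coord_sq (unit_vec l) = 1"
      "coord_sum (unit_vec l) = 1" using that by simp_all
  qed
  have "(\<Sum>l=1..n-1. Vfun b n (inc x l) - Vfun b n x)
      = (\<Sum>l=1..n-1. (1 - b / 2) * 2 * real (x l) + ((1 - b / 2) + b / 2 * (2 * coord_sum x + 1)))"
    by (intro sum.cong) (simp_all add: Vfun_add unit algebra_simps)
  also have "\<dots> = (1 - b / 2) * 2 * coord_sum x + (real n - 1) * ((1 - b / 2) + b / 2 * (2 * coord_sum x + 1))"
    using n_ge_3 by (simp add: sum.distrib coord_sum_def sum_distrib_left)
  finally show ?thesis by (simp add: algebra_simps)
qed

lemma drift_not_S_star:
  assumes x: "inS n x" and "\<not> inSstar n x"
  shows "real k * DeltaV n k b x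
    = - (real k - real n) * (2 + b * (real n - 2)) * (\<Sum>i=1..n-1. real (x i))
      + (real n - 1) * (real k - real n + 2 + b * ((real k - real n + 1) * (real n - 2)) / 2)"
proof -
  have down: "inS n (minus_ones n x)" using assms by (simp add: inSstar_def)
  have diff: "Vfun b n (minus_ones n x) - Vfun b n x
      = (1 - b / 2) * (- 2 * coord_sum x + (real n - 1))
        + b / 2 * ((coord_sum x - (real n - 1))\<^sup>2 - (coord_sum x)\<^sup>2)"
    unfolding Vfun_eq coord_sum_minus_ones[OF x] coord_sq_minus_ones[OF x] by (simp add: algebra_simps)
  show ?thesis
    unfolding drift_first_step[OF x disjI1[OF down]] if_P[OF down] sum_Vfun_inc
      coord_sum_def[symmetric] diff
    by (simp add: power2_eq_square algebra_simps divide_simps)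
qed

lemma drift_add_shiftable:
  assumes y: "inS n y" and d: "minus_ones n y \<in> shiftable d"
  shows "real k * DeltaV n k b (vec_add y d) = real k * DeltaV n k b y
    + ((real k - real n + 1) * (2 + b * (real k - 1)) * hsum (num_zeros n (minus_ones n y))
        - (real k - real n) * (2 + b * (real n - 2))) * coord_sum d"
proof -
  have mixed: "minus_ones n y \<in> mixed_states" "vec_add (minus_ones n y) d \<in> mixed_states"
    using shiftableD(1)[OF d] add_shiftable_in_mixed[OF d] .
  then have not_S: "\<not> inS n (minus_ones n y)" "\<not> inS n (vec_add (minus_ones n y) d)"
    using mixed_statesD(2) by blast+
  have x: "inS n (vec_add y d)"
  proof -
    have "d i = 0" if "i \<notin> {1..n-1}" for i
      using that shiftableD(2)[OF d, of i] mixed_statesD(1)[OF mixed(1)] by (auto simp: states_def)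
    then show ?thesis using y by (auto simp: inS_def states_def vec_add_def)
  qed
  have down_x: "inS n (minus_ones n (vec_add y d)) \<or> minus_ones n (vec_add y d) \<in> mixed_states"
    using mixed(2) by (simp add: minus_ones_add[OF y])
  define H D where "H = hsum (num_zeros n (minus_ones n y))" and "D = coord_sum d"
  have V_add: "Vfun b n (vec_add y d) = Vfun b n y
      + ((1 - b / 2) * (2 * coord_dot d y + coord_sq d) + b / 2 * (2 * D * coord_sum y + D\<^sup>2))"
    using Vfun_add[of b y d] by (simp add: D_def)
  have gain: "shift_gain b d (minus_ones n y)
      = (1 - b / 2) * (2 * (coord_dot d y - D) + 2 * H * D + coord_sq d)
        + b / 2 * (2 * D * (coord_sum y - (real n - 1) + real k * H) + D\<^sup>2)"
    by (simp add: shift_gain_def coord_dot_minus_ones[OF y] coord_sum_minus_ones[OF y] H_def D_def)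
  show ?thesis
    unfolding drift_first_step[OF x down_x] drift_first_step[OF y disjI2[OF mixed(1)]] sum_Vfun_inc
    unfolding minus_ones_add[OF y] if_not_P[OF not_S(1)] if_not_P[OF not_S(2)]
      passage_mean_add_shiftable[OF d] coord_sum_add V_add gain D_def[symmetric] H_def[symmetric]
    by (simp add: algebra_simps)
qed

definition prefix_base :: "nat \<Rightarrow> nat \<Rightarrow> nat" where
  "prefix_base j i = (if 1 \<le> i \<and> i \<le> j then 1 else if j < i \<and> i \<le> n - 1 then 2 else 0)"

lemma prefix_base_facts:
  assumes j: "j \<in> {1..n-2}" and d: "\<And>i. i \<notin> {j+1..n-1} \<Longrightarrow> d i = 0"
  shows "inS n (prefix_base j)" "num_zeros n (minus_ones n (prefix_base j)) = j"
    "minus_ones n (prefix_base j) \<in> shiftable d"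
proof -
  have j': "1 \<le> j" "j \<le> n - 2" using j by auto
  then show "inS n (prefix_base j)" by (auto simp: inS_def states_def prefix_base_def)
  have down: "minus_ones n (prefix_base j) i = (if j < i \<and> i \<le> n - 1 then 1 else 0)" for i
    using j' by (auto simp: minus_ones_def prefix_base_def)
  have "zeros (minus_ones n (prefix_base j)) = {1..j}"
    unfolding zeros_def down using j' by auto
  then show zeros_down: "num_zeros n (minus_ones n (prefix_base j)) = j"
    by (simp add: num_zeros_eq_card)
  show "minus_ones n (prefix_base j) \<in> shiftable d"
    using j zeros_down d by (auto simp: shiftable_def mixed_states_def states_def down)
qed

lemma ones_prefix_eq_add:
  assumes x: "x \<in> states n" "\<forall>i\<in>{1..j}. x i = 1" "\<forall>i\<in>{j+1..n-1}. 2 \<le> x i"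
  shows "x = vec_add (prefix_base j) (\<lambda>i. x i - prefix_base j i)"
    and "i \<notin> {j+1..n-1} \<Longrightarrow> x i - prefix_base j i = 0"
proof -
  have outside: "x i = prefix_base j i" if "i \<notin> {j+1..n-1}" for i
    using that x(1,2) by (auto simp: prefix_base_def states_def)
  then show "i \<notin> {j+1..n-1} \<Longrightarrow> x i - prefix_base j i = 0" by simp
  have "x i = prefix_base j i + (x i - prefix_base j i)" for i
  proof (cases "i \<in> {j+1..n-1}")
    case True
    then have "2 \<le> x i" using x(3) by blast
    then show ?thesis using True by (simp add: prefix_base_def)
  qed (simp add: outside)
  then show "x = vec_add (prefix_base j) (\<lambda>i. x i - prefix_base j i)"
    by (simp add: fun_eq_iff vec_add_def)
qed

lemma drift_ones_prefix:
  assumes j: "j \<in> {1..n-2}"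
    and x: "x \<in> states n" "\<forall>i\<in>{1..j}. x i = 1" "\<forall>i\<in>{j+1..n-1}. 2 \<le> x i"
  shows "real k * DeltaV n k b x = real k * DeltaV n k b (prefix_base j)
    + ((real k - real n + 1) * (2 + b * (real k - 1)) * hsum j - (real k - real n) * (2 + b * (real n - 2)))
      * ((\<Sum>i=j+1..n-1. real (x i)) - (\<Sum>i=j+1..n-1. real (prefix_base j i)))"
proof -
  define d where "d i = x i - prefix_base j i" for i
  note d_outside = ones_prefix_eq_add(2)[OF x, folded d_def]
  note base = prefix_base_facts[OF j, of d, OF d_outside]
  have "coord_sum d = (\<Sum>i=j+1..n-1. real (d i))"
    unfolding coord_sum_def using j d_outside by (intro sum.mono_neutral_right) auto
  also have "\<dots> = (\<Sum>i=j+1..n-1. real (x i) - real (prefix_base j i))"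
    using x(3) by (intro sum.cong) (auto simp: d_def prefix_base_def of_nat_diff)
  finally have "coord_sum d = (\<Sum>i=j+1..n-1. real (x i)) - (\<Sum>i=j+1..n-1. real (prefix_base j i))"
    by (simp add: sum_subtractf)
  then show ?thesis
    using drift_add_shiftable[OF base(1,3)] ones_prefix_eq_add(1)[OF x, folded d_def] base(2) by simp
qed

end

theorem proposition7p4:
  fixes n k :: nat and b :: real
  assumes "3 \<le> n" and "n \<le> k"
  shows "(\<forall>x. inS n x \<and> \<not> inSstar n x \<longrightarrow>
            real k * DeltaV n k b x
              = - (real k - real n) * (2 + b * (real n - 2)) * (\<Sum>i=1..n-1. real (x i))
                + (real n - 1) * (real k - real n + 2
                    + b * ((real k - real n + 1) * (real n - 2)) / 2))
       \<and> (\<exists>\<delta> :: nat \<Rightarrow> real.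
            (\<forall>j\<in>{1..n-2}. \<forall>x. x \<in> states n \<and> (\<forall>i\<in>{1..j}. x i = 1)
                \<and> (\<forall>i\<in>{j+1..n-1}. 2 \<le> x i) \<longrightarrow>
              real k * DeltaV n k b x
                = ((real k - real n + 1) * (2 + b * (real k - 1))
                      * (\<Sum>i=2..j+1. 1 / (real k - real n + real i))
                    - (real k - real n) * (2 + b * (real n - 2)))
                  * (\<Sum>i=j+1..n-1. real (x i))
                  + \<delta> j)
            \<and> (\<exists>M. \<forall>j\<in>{1..n-2}. \<bar>\<delta> j\<bar> \<le> M))"
proof -
  interpret chain n k using assms by unfold_locales
  define c where "c j = (real k - real n + 1) * (2 + b * (real k - 1)) * hsum j
    - (real k - real n) * (2 + b * (real n - 2))" for j
  define \<delta> where
    "\<delta> j = real k * DeltaV n k b (prefix_base j) - c j * (\<Sum>i=j+1..n-1. real (prefix_base j i))" for j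
  have "\<forall>j\<in>{1..n-2}. \<forall>x. x \<in> states n \<and> (\<forall>i\<in>{1..j}. x i = 1) \<and> (\<forall>i\<in>{j+1..n-1}. 2 \<le> x i)
      \<longrightarrow> real k * DeltaV n k b x = c j * (\<Sum>i=j+1..n-1. real (x i)) + \<delta> j"
    using drift_ones_prefix by (simp add: c_def \<delta>_def algebra_simps)
  moreover have "\<exists>M. \<forall>j\<in>{1..n-2}. \<bar>\<delta> j\<bar> \<le> M"
    by (rule exI[of _ "\<Sum>j\<in>{1..n-2}. \<bar>\<delta> j\<bar>"]) (auto intro: member_le_sum)
  ultimately show ?thesis
    using drift_not_S_star unfolding c_def hsum_def by blast
qed

end
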